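(* Let $E=\bigsqcup_{v\in V}\delta(v)$ be a partition of a finite set, $n=|V|$, let $M=(E,\mathcal I)$ be a matroid, and suppose each $v\in V$ has a weak ranking $\succ_v$ on $\delta(v)$. Then the popular common independent set polytope, i.e., the convex hull in $\mathbb R^E$ of the incidence vectors of all popular common independent sets, is a projection of a face of a matroid intersection polytope. Specifically, let $E'=E\cup\{e_v:v\in V\}$ with new elements $e_v$, let $P$ be the partition matroid on $E'$ with blocks $\delta(v)\cup\{e_v\}$ ($v\in V$), and let $M'$ be the matroid on $E'$ whose independent sets are those $X\subseteq E'$ with $X\cap E\in\mathcal I$ and $|X|\le n$; then there is a face of the convex hull of incidence vectors of common independent sets of $P$ and $M'$ whose image under the coordinate projection $\mathbb R^{E'}\to\mathbb R^{E}$ equals the popular common independent set polytope.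
   Context: A weak ranking is a partial order $\succ_v$ (irreflexive, transitive) such that the indifference relation $e\sim_v f$ (meaning neither $e\succ_v f$ nor $f\succ_v e$) is transitive. A common independent set is a set $I\in\mathcal I$ with $|I\cap\delta(v)|\le 1$ for all $v$. For common independent sets $I,I'$, $v$ prefers $I$ to $I'$ if either $I\cap\delta(v)\ne\emptyset=I'\cap\delta(v)$, or $I\cap\delta(v)=\{e\}$, $I'\cap\delta(v)=\{f\}$ with $e\succ_v f$; $\phi(I,I')$ is the number of such $v$; $I$ is popular if $\phi(I,I')\ge\phi(I',I)$ for all common independent sets $I'$. *)

theory Defs
  imports "HOL-Analysis.Analysis"
begin

definition matroid :: "'a set \<Rightarrow> 'a set set \<Rightarrow> bool" where
  "matroid E \<I> \<longleftrightarrow>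
     finite E \<and>
     (\<forall>I\<in>\<I>. I \<subseteq> E) \<and>
     {} \<in> \<I> \<and>
     (\<forall>I J. J \<in> \<I> \<longrightarrow> I \<subseteq> J \<longrightarrow> I \<in> \<I>) \<and>
     (\<forall>I J. I \<in> \<I> \<longrightarrow> J \<in> \<I> \<longrightarrow> card I < card J \<longrightarrow>
        (\<exists>e\<in>J - I. insert e I \<in> \<I>))"

definition is_partition :: "'a set \<Rightarrow> 'v set \<Rightarrow> ('v \<Rightarrow> 'a set) \<Rightarrow> bool" where
  "is_partition E V \<delta> \<longleftrightarrow>
     (\<forall>v\<in>V. \<delta> v \<noteq> {}) \<and>
     (\<Union>v\<in>V. \<delta> v) = E \<and>
     (\<forall>v\<in>V. \<forall>w\<in>V. v \<noteq> w \<longrightarrow> \<delta> v \<inter> \<delta> w = {})"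

definition weak_ranking :: "'a set \<Rightarrow> ('a \<Rightarrow> 'a \<Rightarrow> bool) \<Rightarrow> bool" where
  "weak_ranking S r \<longleftrightarrow>
     (\<forall>e\<in>S. \<not> r e e) \<and>
     (\<forall>e\<in>S. \<forall>f\<in>S. \<forall>g\<in>S. r e f \<longrightarrow> r f g \<longrightarrow> r e g) \<and>
     (\<forall>e\<in>S. \<forall>f\<in>S. \<forall>g\<in>S.
        (\<not> r e f \<and> \<not> r f e) \<longrightarrow> (\<not> r f g \<and> \<not> r g f) \<longrightarrow> (\<not> r e g \<and> \<not> r g e))"

definition common_indep :: "'a set set \<Rightarrow> 'v set \<Rightarrow> ('v \<Rightarrow> 'a set) \<Rightarrow> 'a set \<Rightarrow> bool" where
  "common_indep \<I> V \<delta> I \<longleftrightarrow> I \<in> \<I> \<and> (\<forall>v\<in>V. card (I \<inter> \<delta> v) \<le> 1)"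

definition prefers :: "('v \<Rightarrow> 'a set) \<Rightarrow> ('v \<Rightarrow> 'a \<Rightarrow> 'a \<Rightarrow> bool) \<Rightarrow> 'v \<Rightarrow> 'a set \<Rightarrow> 'a set \<Rightarrow> bool" where
  "prefers \<delta> pref v I I' \<longleftrightarrow>
     (I \<inter> \<delta> v \<noteq> {} \<and> I' \<inter> \<delta> v = {}) \<or>
     (\<exists>e f. I \<inter> \<delta> v = {e} \<and> I' \<inter> \<delta> v = {f} \<and> pref v e f)"

definition phi :: "'v set \<Rightarrow> ('v \<Rightarrow> 'a set) \<Rightarrow> ('v \<Rightarrow> 'a \<Rightarrow> 'a \<Rightarrow> bool) \<Rightarrow> 'a set \<Rightarrow> 'a set \<Rightarrow> nat" where
  "phi V \<delta> pref I I' = card {v\<in>V. prefers \<delta> pref v I I'}"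

definition popular :: "'a set set \<Rightarrow> 'v set \<Rightarrow> ('v \<Rightarrow> 'a set) \<Rightarrow> ('v \<Rightarrow> 'a \<Rightarrow> 'a \<Rightarrow> bool) \<Rightarrow> 'a set \<Rightarrow> bool" where
  "popular \<I> V \<delta> pref I \<longleftrightarrow>
     common_indep \<I> V \<delta> I \<and>
     (\<forall>I'. common_indep \<I> V \<delta> I' \<longrightarrow> phi V \<delta> pref I I' \<ge> phi V \<delta> pref I' I)"

definition incidence :: "'i set \<Rightarrow> real ^ ('i::finite)" where
  "incidence X = (\<chi> i. if i \<in> X then 1 else 0)"

text \<open>Extended ground set E' = E \<union> {e_v}, with E embedded via Inl and e_v = Inr v.\<close>
definition ext_ground :: "'a set \<Rightarrow> 'v set \<Rightarrow> ('a + 'v) set" where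
  "ext_ground E V = Inl ` E \<union> Inr ` V"

definition partition_indep :: "'a set \<Rightarrow> 'v set \<Rightarrow> ('v \<Rightarrow> 'a set) \<Rightarrow> ('a + 'v) set set" where
  "partition_indep E V \<delta> =
     {X. X \<subseteq> ext_ground E V \<and> (\<forall>v\<in>V. card (X \<inter> (Inl ` \<delta> v \<union> {Inr v})) \<le> 1)}"

definition ext_indep :: "'a set \<Rightarrow> 'v set \<Rightarrow> 'a set set \<Rightarrow> ('a + 'v) set set" where
  "ext_indep E V \<I> =
     {X. X \<subseteq> ext_ground E V \<and> {a. Inl a \<in> X} \<in> \<I> \<and> card X \<le> card V}"

definition proj_E :: "real ^ ('a::finite + 'v::finite) \<Rightarrow> real ^ 'a" where
  "proj_E x = (\<chi> a. x $ Inl a)"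

end

theory Submission
  imports Defs
begin

(* Call a vertex deficient for a common independent set I if I does not use one of its top edges
   (most preferred non-loops). An alternating path starts at a deficient vertex and rematches each
   vertex along an edge at least as good as its current one, displacing the edge of I at the next
   vertex. For popular I, the unique matching lemma turns a shortest such path that ends in a free
   edge, back at its start, or at another deficient vertex into an exchange that beats I. Hence
   every edge usable at a reachable vertex is spanned by the edges of I at the reachable
   non-deficient vertices, and the number of non-deficient vertices attains the min-max bound
   min_A |A| + r(top edges of V - A). The least minimizer A gives a set C = cl(top edges of V - A)
   that does not depend on I, and I is popular iff I meets C in a basis of C, uses C only along top
   edges of vertices whose top edges all lie in C, and C contains every edge that a deficient vertex
   prefers to its own. For the lift of I to E' (add e_v for every unmatched v) these become
   conditions on single elements together with |X| = n and |X meets C| = r(C), so the lifts of the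
   popular sets are the maximizers of a linear function, and they span a face. *)

section \<open>Matroids\<close>

locale fin_matroid =
  fixes E :: "'a set" and Ind :: "'a set set"
  assumes matroid: "matroid E Ind"
begin

lemma finite_ground: "finite E"
  using matroid unfolding matroid_def by blast

lemma indep_subset_ground: "I \<in> Ind \<Longrightarrow> I \<subseteq> E"
  using matroid unfolding matroid_def by blast

lemma indep_empty: "{} \<in> Ind"
  using matroid unfolding matroid_def by blast

lemma indep_subset: "J \<in> Ind \<Longrightarrow> I \<subseteq> J \<Longrightarrow> I \<in> Ind"
  using matroid unfolding matroid_def by blast

lemma indep_augment: "I \<in> Ind \<Longrightarrow> J \<in> Ind \<Longrightarrow> card I < card J \<Longrightarrow> \<exists>e\<in>J - I. insert e I \<in> Ind"
  using matroid unfolding matroid_def by blast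

lemma indep_finite: "I \<in> Ind \<Longrightarrow> finite I"
  using indep_subset_ground finite_ground finite_subset by blast

lemma indep_Diff: "I \<in> Ind \<Longrightarrow> I - X \<in> Ind"
  using indep_subset by blast

definition rk :: "'a set \<Rightarrow> nat" where
  "rk X = Max (card ` {Y. Y \<subseteq> X \<and> Y \<in> Ind})"

lemma finite_indep_subsets: "finite {Y. Y \<subseteq> X \<and> Y \<in> Ind}"
  by (rule finite_subset[of _ "Pow E"]) (use finite_ground indep_subset_ground in auto)

lemma card_le_rk: "Y \<subseteq> X \<Longrightarrow> Y \<in> Ind \<Longrightarrow> card Y \<le> rk X"
  unfolding rk_def by (rule Max_ge) (auto intro: finite_indep_subsets)

lemma rk_witness: obtains Y where "Y \<subseteq> X" "Y \<in> Ind" "card Y = rk X"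
proof -
  have "rk X \<in> card ` {Y. Y \<subseteq> X \<and> Y \<in> Ind}"
    unfolding rk_def by (rule Max_in) (use finite_indep_subsets indep_empty in auto)
  then show ?thesis using that by auto
qed

lemma extend_to_rk_witness:
  "B \<subseteq> X \<Longrightarrow> B \<in> Ind \<Longrightarrow> \<exists>Y. B \<subseteq> Y \<and> Y \<subseteq> X \<and> Y \<in> Ind \<and> card Y = rk X"
proof (induction "rk X - card B" arbitrary: B rule: less_induct)
  case less
  show ?case
  proof (cases "card B = rk X")
    case True then show ?thesis using less.prems by blast
  next
    case False
    with card_le_rk[OF less.prems] have lt: "card B < rk X" by simp
    obtain Y0 where Y0: "Y0 \<subseteq> X" "Y0 \<in> Ind" "card Y0 = rk X" by (rule rk_witness)
    obtain e where e: "e \<in> Y0 - B" "insert e B \<in> Ind"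
      using indep_augment[OF less.prems(2) Y0(2)] lt Y0(3) by auto
    have "card (insert e B) = Suc (card B)" using e indep_finite[OF less.prems(2)] by auto
    then have "rk X - card (insert e B) < rk X - card B" using lt by simp
    from less.hyps[OF this] show ?thesis using e Y0 less.prems by blast
  qed
qed

lemma rk_mono: "X \<subseteq> Y \<Longrightarrow> rk X \<le> rk Y"
  by (metis card_le_rk order_trans rk_witness)

lemma rk_indep: "I \<in> Ind \<Longrightarrow> rk I = card I"
  by (metis card_le_rk card_mono indep_finite le_antisym order_refl rk_witness)

lemma rk_insert_le: "rk (insert e X) \<le> Suc (rk X)"
proof -
  obtain Y where Y: "Y \<subseteq> insert e X" "Y \<in> Ind" "card Y = rk (insert e X)" by (rule rk_witness)
  have "card (Y - {e}) \<le> rk X"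
    by (rule card_le_rk) (use Y indep_subset in auto)
  moreover have "card Y \<le> Suc (card (Y - {e}))"
    using indep_finite[OF Y(2)] by (cases "e \<in> Y") (simp_all add: card_Suc_Diff1)
  ultimately show ?thesis using Y by simp
qed

lemma rk_submod: "rk (X \<union> Y) + rk (X \<inter> Y) \<le> rk X + rk Y"
proof -
  obtain B where B: "B \<subseteq> X \<inter> Y" "B \<in> Ind" "card B = rk (X \<inter> Y)" by (rule rk_witness)
  obtain Z where Z: "B \<subseteq> Z" "Z \<subseteq> X \<union> Y" "Z \<in> Ind" "card Z = rk (X \<union> Y)"
    using extend_to_rk_witness[of B "X \<union> Y"] B by blast
  have fZ: "finite Z" using indep_finite Z by blast
  have "card (Z \<inter> X) \<le> rk X" "card (Z \<inter> Y) \<le> rk Y"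
    by (rule card_le_rk; use Z indep_subset in auto)+
  moreover have "card (Z \<inter> X) + card (Z \<inter> Y) = card (Z \<inter> X \<union> Z \<inter> Y) + card (Z \<inter> X \<inter> Y)"
    using card_Un_Int[of "Z \<inter> X" "Z \<inter> Y"] fZ by (simp add: Int_assoc Int_left_commute)
  moreover have "Z \<inter> X \<union> Z \<inter> Y = Z" using Z by auto
  moreover have "card B \<le> card (Z \<inter> X \<inter> Y)"
    by (rule card_mono) (use fZ B Z in auto)
  ultimately show ?thesis using B Z by simp
qed

definition cl :: "'a set \<Rightarrow> 'a set" where
  "cl X = {e \<in> E. rk (insert e X) = rk X}"

lemma cl_subset_ground: "cl X \<subseteq> E"
  unfolding cl_def by auto

lemma subset_cl: "X \<subseteq> E \<Longrightarrow> X \<subseteq> cl X"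
  unfolding cl_def by (auto simp: insert_absorb)

lemma indep_insert_iff:
  assumes I: "I \<in> Ind" and e: "e \<in> E" "e \<notin> I"
  shows "insert e I \<in> Ind \<longleftrightarrow> e \<notin> cl I"
proof
  assume "insert e I \<in> Ind"
  then show "e \<notin> cl I"
    unfolding cl_def using rk_indep I e indep_finite by simp
next
  assume "e \<notin> cl I"
  then have "rk (insert e I) \<noteq> rk I" unfolding cl_def using e by simp
  moreover have "rk I \<le> rk (insert e I)" by (rule rk_mono) auto
  ultimately have r: "rk (insert e I) = Suc (card I)" using rk_insert_le[of e I] rk_indep[OF I] by simp
  obtain Y where Y: "Y \<subseteq> insert e I" "Y \<in> Ind" "card Y = rk (insert e I)" by (rule rk_witness)
  have "Y = insert e I" by (rule card_subset_eq) (use Y r indep_finite[OF I] e in auto)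
  then show "insert e I \<in> Ind" using Y by simp
qed

lemma notin_cl_if_indep_insert: "insert e J \<in> Ind \<Longrightarrow> e \<notin> J \<Longrightarrow> e \<notin> cl J"
  using indep_insert_iff[of J e] indep_subset indep_subset_ground by auto

lemma in_cl_if_dep_insert: "J \<in> Ind \<Longrightarrow> e \<in> E \<Longrightarrow> e \<notin> J \<Longrightarrow> insert e J \<notin> Ind \<Longrightarrow> e \<in> cl J"
  using indep_insert_iff by blast

lemma cl_mono: "X \<subseteq> Y \<Longrightarrow> cl X \<subseteq> cl Y"
proof
  fix e assume XY: "X \<subseteq> Y" and "e \<in> cl X"
  then have e: "e \<in> E" and r: "rk (insert e X) = rk X" unfolding cl_def by auto
  show "e \<in> cl Y"
  proof (cases "e \<in> Y")
    case True then show ?thesis using e unfolding cl_def by (simp add: insert_absorb)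
  next
    case False
    have "insert e X \<union> Y = insert e Y" "insert e X \<inter> Y = X" using XY False by auto
    then have "rk (insert e Y) \<le> rk Y" using rk_submod[of "insert e X" Y] r by simp
    moreover have "rk Y \<le> rk (insert e Y)" by (rule rk_mono) auto
    ultimately show ?thesis using e unfolding cl_def by simp
  qed
qed

lemma rk_Un_cl: "A \<subseteq> cl B \<Longrightarrow> rk (B \<union> A) = rk B"
proof -
  assume A: "A \<subseteq> cl B"
  obtain Y where Y: "Y \<subseteq> B" "Y \<in> Ind" "card Y = rk B" by (rule rk_witness)
  obtain Z where Z: "Y \<subseteq> Z" "Z \<subseteq> B \<union> A" "Z \<in> Ind" "card Z = rk (B \<union> A)"
    using extend_to_rk_witness[of Y "B \<union> A"] Y by blast
  have "card (Z \<inter> B) \<le> rk B" by (rule card_le_rk) (use Z indep_subset in auto)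
  moreover have "Y \<subseteq> Z \<inter> B" "finite (Z \<inter> B)" using Y Z indep_finite by auto
  ultimately have ZB: "Z \<inter> B = Y"
    using card_seteq[of "Z \<inter> B" Y] Y(3) by auto
  have "Z = Y"
  proof (rule ccontr)
    assume "Z \<noteq> Y"
    then obtain e where e: "e \<in> Z" "e \<notin> Y" using Z by blast
    then have "e \<in> A" "e \<notin> B" using ZB Z by blast+
    have "insert e Y \<in> Ind" using indep_subset[OF Z(3)] e Z by auto
    then have "card (insert e Y) \<le> rk (insert e B)" by (rule card_le_rk[rotated]) (use Y in auto)
    moreover have "card (insert e Y) = Suc (rk B)" using Y e indep_finite by auto
    moreover have "rk (insert e B) = rk B" using A \<open>e \<in> A\<close> unfolding cl_def by auto
    ultimately show False by simp
  qed
  then show ?thesis using Y Z by simp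
qed

lemma rk_cl: "X \<subseteq> E \<Longrightarrow> rk (cl X) = rk X"
  by (metis order_refl rk_Un_cl subset_cl sup.absorb2)

lemma cl_subset_cl: "A \<subseteq> cl B \<Longrightarrow> cl A \<subseteq> cl B"
proof
  fix e assume A: "A \<subseteq> cl B" and e: "e \<in> cl A"
  have "e \<in> cl (B \<union> A)" using cl_mono[of A "B \<union> A"] e by auto
  then have "rk (insert e (B \<union> A)) = rk B" using rk_Un_cl[OF A] unfolding cl_def by auto
  moreover have "rk (insert e B) \<le> rk (insert e (B \<union> A))" "rk B \<le> rk (insert e B)"
    by (rule rk_mono; auto)+
  ultimately show "e \<in> cl B" using e cl_subset_ground unfolding cl_def by auto
qed

lemma card_le_rk_if_subset_cl: "K \<subseteq> cl X \<Longrightarrow> K \<in> Ind \<Longrightarrow> card K \<le> rk X"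
  using card_le_rk[of K "X \<union> cl X"] rk_Un_cl[of "cl X" X] by auto

lemma cl_exchange:
  assumes "e \<in> E" "f \<in> E" "e \<in> cl (insert f A)" "e \<notin> cl A"
  shows "f \<in> cl (insert e A)"
proof (rule ccontr)
  assume nf: "f \<notin> cl (insert e A)"
  have "rk A \<le> rk (insert e A)" "rk (insert e A) \<le> rk (insert f (insert e A))"
    by (rule rk_mono; auto)+
  moreover have "rk (insert e A) \<noteq> rk A" "rk (insert f (insert e A)) \<noteq> rk (insert e A)"
    using assms nf unfolding cl_def by auto
  ultimately have "rk (insert f (insert e A)) = Suc (Suc (rk A))"
    using rk_insert_le[of e A] rk_insert_le[of f "insert e A"] by linarith
  moreover have "rk (insert f (insert e A)) = rk (insert f A)"
    using assms(3) unfolding cl_def by (auto simp: insert_commute)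
  ultimately show False using rk_insert_le[of f A] by linarith
qed

lemma cl_Int_indep_subsets:
  assumes I: "I \<in> Ind" and AB: "A \<subseteq> I" "B \<subseteq> I"
  shows "cl A \<inter> cl B \<subseteq> cl (A \<inter> B)"
proof
  fix e assume e: "e \<in> cl A \<inter> cl B"
  then have eE: "e \<in> E" using cl_subset_ground by auto
  have indep: "A \<in> Ind" "B \<in> Ind" "A \<inter> B \<in> Ind" "A \<union> B \<in> Ind"
    using AB by (blast intro: indep_subset[OF I])+
  have fin: "finite A" "finite B" using indep indep_finite by auto
  show "e \<in> cl (A \<inter> B)"
  proof (cases "e \<in> I")
    case True
    have "e \<in> X" if "X \<in> Ind" "X \<subseteq> I" "e \<in> cl X" for X
      using indep_insert_iff[OF that(1) eE] indep_subset[OF I, of "insert e X"] True that by blast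
    then have "e \<in> A \<inter> B" using indep e AB by blast
    then show ?thesis using subset_cl[OF indep_subset_ground[OF indep(3)]] by auto
  next
    case False
    show ?thesis
    proof (rule ccontr)
      assume "e \<notin> cl (A \<inter> B)"
      then have "insert e (A \<inter> B) \<in> Ind" using indep_insert_iff[OF indep(3) eE] False AB by auto
      moreover have "e \<notin> A \<inter> B" using False AB by blast
      ultimately have c1: "rk (insert e (A \<inter> B)) = Suc (card (A \<inter> B))"
        using rk_indep[of "insert e (A \<inter> B)"] fin by simp
      have "rk (insert e A \<union> insert e B) + rk (insert e A \<inter> insert e B) \<le> rk (insert e A) + rk (insert e B)"
        by (rule rk_submod)
      moreover have "insert e A \<inter> insert e B = insert e (A \<inter> B)" by auto
      moreover have "rk (insert e A) = card A" "rk (insert e B) = card B"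
        using e rk_indep indep unfolding cl_def by auto
      moreover have "card (A \<union> B) \<le> rk (insert e A \<union> insert e B)" by (rule card_le_rk) (use indep in auto)
      moreover have "card (A \<union> B) + card (A \<inter> B) = card A + card B" using card_Un_Int fin by metis
      ultimately show False using c1 by simp
    qed
  qed
qed

lemma in_cl_replaceable:
  assumes I: "I \<in> Ind" and e: "e \<in> cl I" "e \<notin> I"
  shows "e \<in> cl {x \<in> I. insert e (I - {x}) \<in> Ind}"
proof -
  let ?K = "{x \<in> I. insert e (I - {x}) \<notin> Ind}"
  have eE: "e \<in> E" using e cl_subset_ground by auto
  have "e \<in> cl (I - K)" if "K \<subseteq> ?K" for K
  proof -
    have "finite K" using that finite_subset[of K I] indep_finite[OF I] by blast
    then show ?thesis using that
    proof (induction K rule: finite_induct)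
      case empty then show ?case using e by simp
    next
      case (insert x K)
      then have "e \<in> cl (I - K)" "e \<in> cl (I - {x})"
        using in_cl_if_dep_insert[OF indep_Diff[OF I] eE, of "{x}"] e by auto
      then have "e \<in> cl ((I - K) \<inter> (I - {x}))" using cl_Int_indep_subsets[OF I] by blast
      moreover have "(I - K) \<inter> (I - {x}) = I - insert x K" by blast
      ultimately show ?case by simp
    qed
  qed
  moreover have "I - ?K = {x \<in> I. insert e (I - {x}) \<in> Ind}" by auto
  ultimately show ?thesis by (metis order_refl)
qed

lemma indep_exchange_after_exchange:
  assumes I: "I \<in> Ind" and x: "x \<in> I" "x \<noteq> x'" and y: "y \<in> E" "y \<notin> I" "y \<noteq> y'" and y': "y' \<notin> I"
    and exch: "insert y (I - {x}) \<in> Ind" "insert y' (I - {x'}) \<in> Ind"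
    and no_exch: "insert y (I - {x'}) \<notin> Ind"
  shows "insert y (insert y' (I - {x'}) - {x}) \<in> Ind"
proof (rule ccontr)
  let ?A = "I - {x'} - {x}"
  have y'E: "y' \<in> E" using exch(2) indep_subset_ground by blast
  assume "insert y (insert y' (I - {x'}) - {x}) \<notin> Ind"
  moreover have "insert y' (I - {x'}) - {x} = insert y' ?A" using x y' by auto
  moreover have "insert y' ?A \<in> Ind" by (rule indep_subset[OF exch(2)]) blast
  ultimately have "y \<in> cl (insert y' ?A)" using in_cl_if_dep_insert y by auto
  moreover have "insert y ?A \<in> Ind" by (rule indep_subset[OF exch(1)]) blast
  then have "y \<notin> cl ?A" using notin_cl_if_indep_insert y(2) by blast
  ultimately have "y' \<in> cl (insert y ?A)" using cl_exchange[OF y(1) y'E] by blast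
  moreover have "insert y ?A \<subseteq> cl (I - {x'})"
    using in_cl_if_dep_insert[OF indep_Diff[OF I] y(1)] no_exch y(2)
      subset_cl[of "I - {x'}"] indep_subset_ground[OF I] by auto
  ultimately have "y' \<in> cl (I - {x'})" using cl_subset_cl by blast
  then show False using notin_cl_if_indep_insert[OF exch(2)] y' by auto
qed

lemma dep_exchange_after_exchange:
  assumes I: "I \<in> Ind" and y: "y \<in> E" "y \<notin> I" "y \<noteq> y'"
    and no_exch: "insert y (I - {x}) \<notin> Ind" "insert y (I - {x'}) \<notin> Ind"
  shows "insert y (insert y' (I - {x'}) - {x}) \<notin> Ind"
proof
  assume indep: "insert y (insert y' (I - {x'}) - {x}) \<in> Ind"
  have "y \<in> cl (I - {x})" "y \<in> cl (I - {x'})"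
    using in_cl_if_dep_insert[OF indep_Diff[OF I] y(1)] no_exch y(2) by auto
  then have "y \<in> cl ((I - {x}) \<inter> (I - {x'}))"
    using cl_Int_indep_subsets[OF I, of "I - {x}" "I - {x'}"] by auto
  moreover have "(I - {x}) \<inter> (I - {x'}) \<subseteq> insert y' (I - {x'}) - {x}" by blast
  ultimately have "y \<in> cl (insert y' (I - {x'}) - {x})" using cl_mono by blast
  moreover have "y \<notin> insert y' (I - {x'}) - {x}" using y by auto
  ultimately show False using notin_cl_if_indep_insert[OF indep] by blast
qed

text \<open>Krogdahl's unique matching lemma.\<close>
lemma unique_matching_exchange:
  fixes k :: nat
  assumes "I \<in> Ind"
    and "\<And>i. i < k \<Longrightarrow> x i \<in> I" "\<And>i. i < k \<Longrightarrow> y i \<notin> I"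
    and "\<And>i. i < k \<Longrightarrow> insert (y i) (I - {x i}) \<in> Ind"
    and "\<And>i j. i < j \<Longrightarrow> j < k \<Longrightarrow> insert (y i) (I - {x j}) \<notin> Ind"
  shows "I - x ` {..<k} \<union> y ` {..<k} \<in> Ind"
  using assms
proof (induction k arbitrary: I)
  case 0
  then show ?case by simp
next
  case (Suc k)
  note I = Suc.prems(1) and xI = Suc.prems(2) and yI = Suc.prems(3)
    and exch = Suc.prems(4) and no_exch = Suc.prems(5)
  have yE: "y i \<in> E" if "i < Suc k" for i
    using exch[OF that] indep_subset_ground by blast
  have x_ne: "x i \<noteq> x k" and y_ne: "y i \<noteq> y k" if "i < k" for i
    using exch[of i] exch[of k] no_exch[of i k] that by force+
  define I1 where "I1 = insert (y k) (I - {x k})"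
  have "I1 - x ` {..<k} \<union> y ` {..<k} \<in> Ind"
  proof (rule Suc.IH)
    show "I1 \<in> Ind" using exch[of k] unfolding I1_def by simp
    show "x i \<in> I1" "y i \<notin> I1" if "i < k" for i
      using xI[of i] x_ne[OF that] yI[of i] y_ne[OF that] that unfolding I1_def by auto
    show "insert (y i) (I1 - {x i}) \<in> Ind" if i: "i < k" for i
    proof -
      have i': "i < Suc k" using i by simp
      show ?thesis unfolding I1_def
        by (rule indep_exchange_after_exchange[OF I xI[OF i'] x_ne[OF i] yE[OF i'] yI[OF i'] y_ne[OF i]
              yI[OF lessI] exch[OF i'] exch[OF lessI] no_exch[OF i lessI]])
    qed
    show "insert (y i) (I1 - {x j}) \<notin> Ind" if ij: "i < j" "j < k" for i j
    proof -
      have i: "i < Suc k" "i < k" and j: "j < Suc k" using ij by auto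
      show ?thesis unfolding I1_def
        by (rule dep_exchange_after_exchange[OF I yE[OF i(1)] yI[OF i(1)] y_ne[OF i(2)]
              no_exch[OF ij(1) j] no_exch[OF i(2) lessI]])
    qed
  qed
  moreover have "y k \<notin> x ` {..<k}" using xI yI[of k] by auto
  then have "I1 - x ` {..<k} \<union> y ` {..<k} = I - x ` {..<Suc k} \<union> y ` {..<Suc k}"
    unfolding I1_def lessThan_Suc image_insert
    by (metis (no_types) Diff_insert2 Un_insert_left Un_insert_right insert_Diff_if)
  ultimately show ?case by simp
qed

lemma unique_matching_exchange_insert:
  fixes k :: nat
  assumes I: "I \<in> Ind"
    and xI: "\<And>i. i < k \<Longrightarrow> x i \<in> I" and yI: "\<And>i. i < k \<Longrightarrow> y i \<notin> I"
    and exch: "\<And>i. i < k \<Longrightarrow> insert (y i) (I - {x i}) \<in> Ind"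
    and no_exch: "\<And>i j. i < j \<Longrightarrow> j < k \<Longrightarrow> insert (y i) (I - {x j}) \<notin> Ind"
    and z: "z \<notin> I" "insert z I \<in> Ind"
    and y_dep: "\<And>i. i < k \<Longrightarrow> insert (y i) I \<notin> Ind"
  shows "insert z (I - x ` {..<k} \<union> y ` {..<k}) \<in> Ind"
proof -
  have zE: "z \<in> E" and yE: "\<And>i. i < k \<Longrightarrow> y i \<in> E"
    using z exch indep_subset_ground by blast+
  have y_cl: "y i \<in> cl I" if "i < k" for i
    using in_cl_if_dep_insert[OF I] yE yI y_dep that by blast
  have "insert (y i) (insert z I - {x i}) \<in> Ind" if i: "i < k" for i
  proof -
    let ?A = "insert (y i) (I - {x i})"
    have "?A \<subseteq> cl I" using y_cl[OF i] subset_cl[OF indep_subset_ground[OF I]] by auto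
    then have "z \<notin> cl ?A"
      using cl_subset_cl notin_cl_if_indep_insert[OF z(2) z(1)] by blast
    moreover have "z \<notin> ?A" using z y_dep i by auto
    ultimately have "insert z ?A \<in> Ind" using indep_insert_iff[OF exch[OF i] zE] by blast
    moreover have "insert z ?A = insert (y i) (insert z I - {x i})" using xI[OF i] z by auto
    ultimately show ?thesis by simp
  qed
  moreover have "insert (y i) (insert z I - {x j}) \<notin> Ind" if ij: "i < j" "j < k" for i j
  proof
    assume indep: "insert (y i) (insert z I - {x j}) \<in> Ind"
    have "i < k" using ij by simp
    then have "y i \<in> cl (I - {x j})"
      using in_cl_if_dep_insert[OF indep_Diff[OF I] yE, of i "{x j}"] no_exch[OF ij] yI by auto
    moreover have "I - {x j} \<subseteq> insert z I - {x j}" by blast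
    ultimately have "y i \<in> cl (insert z I - {x j})" using cl_mono by blast
    moreover have "y i \<notin> insert z I - {x j}" using yI z y_dep ij by auto
    ultimately show False using notin_cl_if_indep_insert[OF indep] by blast
  qed
  moreover have "y i \<noteq> z" if "i < k" for i using z(2) y_dep that by auto
  ultimately have "insert z I - x ` {..<k} \<union> y ` {..<k} \<in> Ind"
    using unique_matching_exchange[OF z(2), of k x y] xI yI by auto
  moreover have "insert z I - x ` {..<k} = insert z (I - x ` {..<k})" using xI z by auto
  ultimately show ?thesis by simp
qed

lemma indep_swap_parallel:
  assumes X: "X \<in> Ind" "a \<in> X" and b: "b \<in> E" "b \<notin> X" "b \<in> cl {a}" "b \<notin> cl {}"
  shows "insert b (X - {a}) \<in> Ind"
proof (rule ccontr)
  assume dep: "insert b (X - {a}) \<notin> Ind"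
  have "a \<in> cl {b}"
    using cl_exchange[OF b(1) _ _ b(4)] b(3) indep_subset_ground X by auto
  moreover have "b \<in> cl (X - {a})" by (rule in_cl_if_dep_insert) (use X b dep indep_Diff in auto)
  then have "cl {b} \<subseteq> cl (X - {a})" by (intro cl_subset_cl) simp
  ultimately have "a \<in> cl (X - {a})" by auto
  moreover have "insert a (X - {a}) \<in> Ind" using X by (simp add: insert_absorb)
  ultimately show False using notin_cl_if_indep_insert by blast
qed

end

section \<open>Partition matroids, free extensions and truncations\<close>

lemma card_eq_card_blocks_hit:
  assumes "finite V" "finite X" "X \<subseteq> (\<Union>v\<in>V. B v)" "disjoint_family_on B V"
    and "\<And>v. v \<in> V \<Longrightarrow> card (X \<inter> B v) \<le> 1"
  shows "card X = card {v \<in> V. X \<inter> B v \<noteq> {}}"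
proof -
  let ?H = "{v \<in> V. X \<inter> B v \<noteq> {}}"
  have "card (\<Union>v\<in>?H. X \<inter> B v) = (\<Sum>v\<in>?H. card (X \<inter> B v))"
    by (rule card_UN_disjoint) (use assms(1,2,4) in \<open>auto simp: disjoint_family_on_def\<close>)
  moreover have "(\<Union>v\<in>?H. X \<inter> B v) = X" using assms(3) by blast
  ultimately have "card X = (\<Sum>v\<in>?H. card (X \<inter> B v))" by simp
  also have "\<dots> = (\<Sum>v\<in>?H. 1)"
    by (rule sum.cong) (use assms(2,5) in \<open>auto simp: le_Suc_eq\<close>)
  finally show ?thesis by simp
qed

lemma matroid_partition:
  assumes "finite V" "finite G" "G = (\<Union>v\<in>V. B v)" "disjoint_family_on B V"
  shows "matroid G {X. X \<subseteq> G \<and> (\<forall>v\<in>V. card (X \<inter> B v) \<le> 1)}" (is "matroid G ?P")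
  unfolding matroid_def
proof (intro conjI allI ballI impI)
  fix I J
  show "I \<in> ?P" if "J \<in> ?P" "I \<subseteq> J"
  proof -
    have "card (I \<inter> B v) \<le> card (J \<inter> B v)" for v
      using that assms(2) by (intro card_mono) (auto intro: finite_subset)
    then show ?thesis using that by (fastforce intro: le_trans)
  qed
  assume I: "I \<in> ?P" and J: "J \<in> ?P" and lt: "card I < card J"
  have hit: "card X = card {v \<in> V. X \<inter> B v \<noteq> {}}" if X: "X \<in> ?P" for X
  proof (rule card_eq_card_blocks_hit[OF assms(1) _ _ assms(4)])
    show "finite X" using X assms(2) finite_subset by blast
    show "X \<subseteq> (\<Union>v\<in>V. B v)" using X assms(3) by blast
    show "card (X \<inter> B v) \<le> 1" if "v \<in> V" for v using X that by blast
  qed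
  have "\<not> {v \<in> V. J \<inter> B v \<noteq> {}} \<subseteq> {v \<in> V. I \<inter> B v \<noteq> {}}"
  proof
    assume "{v \<in> V. J \<inter> B v \<noteq> {}} \<subseteq> {v \<in> V. I \<inter> B v \<noteq> {}}"
    then have "card {v \<in> V. J \<inter> B v \<noteq> {}} \<le> card {v \<in> V. I \<inter> B v \<noteq> {}}"
      by (rule card_mono[rotated]) (use assms(1) in simp)
    then show False using hit[OF I] hit[OF J] lt by simp
  qed
  then obtain v e where v: "v \<in> V" "I \<inter> B v = {}" and e: "e \<in> J" "e \<in> B v" by blast
  have "card (insert e I \<inter> B w) \<le> 1" if "w \<in> V" for w
  proof (cases "w = v")
    case True
    then have "insert e I \<inter> B w = {e}" using v e by auto
    then show ?thesis by simp
  next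
    case False
    then have "e \<notin> B w" using e assms(4) v that by (auto simp: disjoint_family_on_def)
    then show ?thesis using I that by auto
  qed
  then have "insert e I \<in> ?P" using I J e by auto
  moreover have "e \<notin> I" using v e by blast
  ultimately show "\<exists>e\<in>J - I. insert e I \<in> ?P" using e by blast
qed (use assms in auto)

lemma matroid_truncation:
  assumes "matroid G Ind"
  shows "matroid G {X \<in> Ind. card X \<le> k}"
proof -
  interpret fin_matroid G Ind by (rule fin_matroid.intro) (rule assms)
  show ?thesis
    unfolding matroid_def
  proof (intro conjI allI ballI impI)
    fix I J
    show "I \<in> {X \<in> Ind. card X \<le> k}" if "J \<in> {X \<in> Ind. card X \<le> k}" "I \<subseteq> J"
      using that indep_subset indep_finite card_mono[of J I] by auto
    assume I: "I \<in> {X \<in> Ind. card X \<le> k}" and J: "J \<in> {X \<in> Ind. card X \<le> k}"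
      and lt: "card I < card J"
    then obtain e where e: "e \<in> J - I" "insert e I \<in> Ind" using indep_augment by auto
    have "card (insert e I) = Suc (card I)" using e(1) indep_finite I by simp
    then have "card (insert e I) \<le> k" using lt J by simp
    then show "\<exists>e\<in>J - I. insert e I \<in> {X \<in> Ind. card X \<le> k}" using e by blast
  qed (use finite_ground indep_subset_ground indep_empty in auto)
qed

lemma card_Plus_parts:
  assumes "finite X"
  shows "card X = card {a. Inl a \<in> X} + card {b. Inr b \<in> X}"
proof -
  have "X = {a. Inl a \<in> X} <+> {b. Inr b \<in> X}" by (auto simp: Plus_def image_iff) (metis sum.exhaust)
  then show ?thesis using card_Plus assms by (metis finite_Plus_iff)
qed

lemma matroid_Plus_free:
  assumes "matroid E Ind" "finite V"
  shows "matroid (E <+> V) {X. X \<subseteq> E <+> V \<and> {a. Inl a \<in> X} \<in> Ind}" (is "matroid _ ?P")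
proof -
  interpret fin_matroid E Ind by (rule fin_matroid.intro) (rule assms)
  show ?thesis
    unfolding matroid_def
  proof (intro conjI allI ballI impI)
    have fin: "finite X" if "X \<subseteq> E <+> V" for X
      using that finite_subset finite_ground assms(2) by (auto simp: Plus_def)
    show "finite (E <+> V)" using finite_ground assms(2) by simp
    show "{} \<in> ?P" using indep_empty by simp
    fix I J
    show "I \<in> ?P" if "J \<in> ?P" "I \<subseteq> J"
      using that indep_subset[of "{a. Inl a \<in> J}" "{a. Inl a \<in> I}"] by auto
    assume I: "I \<in> ?P" and J: "J \<in> ?P" and lt: "card I < card J"
    show "\<exists>e\<in>J - I. insert e I \<in> ?P"
    proof (cases "card {a. Inl a \<in> I} < card {a. Inl a \<in> J}")
      case True
      then obtain a where a: "Inl a \<in> J - I" "insert a {a. Inl a \<in> I} \<in> Ind"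
        using indep_augment[OF _ _ True] I J by blast
      moreover have "{b. Inl b \<in> insert (Inl a) I} = insert a {a. Inl a \<in> I}" by auto
      ultimately have "insert (Inl a) I \<in> ?P" using I J by auto
      then show ?thesis using a by blast
    next
      case False
      then have "card {b. Inr b \<in> I} < card {b. Inr b \<in> J}"
        using lt card_Plus_parts[OF fin] I J by fastforce
      moreover have "finite {b. Inr b \<in> I}"
        using finite_vimageI[OF fin, of I Inr] I by (simp add: vimage_def)
      ultimately have "\<not> {b. Inr b \<in> J} \<subseteq> {b. Inr b \<in> I}" using card_mono leD by blast
      then obtain b where b: "Inr b \<in> J" "Inr b \<notin> I" by blast
      have "{a. Inl a \<in> insert (Inr b) I} = {a. Inl a \<in> I}" by auto
      then have "insert (Inr b) I \<in> ?P" using I J b by auto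
      then show ?thesis using b by blast
    qed
  qed (auto simp: Plus_def)
qed

lemma matroid_partition_indep:
  assumes "is_partition E V \<delta>" "finite E" "finite V"
  shows "matroid (ext_ground E V) (partition_indep E V \<delta>)"
proof -
  define B where "B v = Inl ` \<delta> v \<union> {Inr v}" for v :: 'b
  have cover: "ext_ground E V = (\<Union>v\<in>V. B v)"
    using assms(1) unfolding is_partition_def ext_ground_def B_def by auto
  have disj: "disjoint_family_on B V"
    using assms(1) unfolding is_partition_def disjoint_family_on_def B_def by auto
  have "matroid (ext_ground E V) {X. X \<subseteq> ext_ground E V \<and> (\<forall>v\<in>V. card (X \<inter> B v) \<le> 1)}"
    by (rule matroid_partition[OF assms(3) _ cover disj]) (simp add: ext_ground_def assms(2,3))
  then show ?thesis unfolding partition_indep_def B_def .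
qed

lemma matroid_ext_indep:
  assumes "matroid E Ind" "finite V"
  shows "matroid (ext_ground E V) (ext_indep E V Ind)"
  using matroid_truncation[OF matroid_Plus_free[OF assms], of "card V"]
  unfolding ext_indep_def ext_ground_def Plus_def by (simp only: mem_Collect_eq conj_assoc)

section \<open>Popularity\<close>

locale popularity = fin_matroid E Ind for E :: "'a set" and Ind +
  fixes V :: "'v set" and \<delta> :: "'v \<Rightarrow> 'a set" and pref :: "'v \<Rightarrow> 'a \<Rightarrow> 'a \<Rightarrow> bool"
  assumes partition: "is_partition E V \<delta>"
    and weak_rankings: "\<forall>v\<in>V. weak_ranking (\<delta> v) (pref v)"
    and finite_V: "finite V"
begin

abbreviation cis :: "'a set \<Rightarrow> bool" where
  "cis J \<equiv> common_indep Ind V \<delta> J"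

lemma delta_subset: "v \<in> V \<Longrightarrow> \<delta> v \<subseteq> E"
  using partition unfolding is_partition_def by blast

lemma delta_unique: "v \<in> V \<Longrightarrow> w \<in> V \<Longrightarrow> e \<in> \<delta> v \<Longrightarrow> e \<in> \<delta> w \<Longrightarrow> v = w"
  using partition unfolding is_partition_def by blast

lemma delta_cover: "e \<in> E \<Longrightarrow> \<exists>v\<in>V. e \<in> \<delta> v"
  using partition unfolding is_partition_def by blast

lemma finite_delta: "v \<in> V \<Longrightarrow> finite (\<delta> v)"
  using delta_subset finite_ground finite_subset by blast

lemma pref_irrefl: "v \<in> V \<Longrightarrow> e \<in> \<delta> v \<Longrightarrow> \<not> pref v e e"
  using weak_rankings unfolding weak_ranking_def by blast

lemma pref_trans:
  "v \<in> V \<Longrightarrow> e \<in> \<delta> v \<Longrightarrow> f \<in> \<delta> v \<Longrightarrow> g \<in> \<delta> v \<Longrightarrow> pref v e f \<Longrightarrow> pref v f g \<Longrightarrow> pref v e g"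
  using weak_rankings unfolding weak_ranking_def by blast

lemma indiff_trans:
  "v \<in> V \<Longrightarrow> e \<in> \<delta> v \<Longrightarrow> f \<in> \<delta> v \<Longrightarrow> g \<in> \<delta> v \<Longrightarrow> \<not> pref v e f \<Longrightarrow> \<not> pref v f e
    \<Longrightarrow> \<not> pref v f g \<Longrightarrow> \<not> pref v g f \<Longrightarrow> \<not> pref v e g"
  using weak_rankings unfolding weak_ranking_def by blast

lemma not_prefers_if_same_at:
  assumes v: "v \<in> V" and eq: "J \<inter> \<delta> v = I \<inter> \<delta> v"
  shows "\<not> prefers \<delta> pref v I J"
proof
  assume "prefers \<delta> pref v I J"
  then obtain e where "I \<inter> \<delta> v = {e}" "pref v e e" using eq unfolding prefers_def by auto
  then show False using pref_irrefl[OF v] by blast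
qed

lemma cis_indep: "cis J \<Longrightarrow> J \<in> Ind"
  unfolding common_indep_def by simp

lemma cis_Int_delta:
  assumes "cis J" "v \<in> V" "x \<in> J \<inter> \<delta> v"
  shows "J \<inter> \<delta> v = {x}"
proof -
  have "finite (J \<inter> \<delta> v)" "card (J \<inter> \<delta> v) \<le> 1"
    using finite_delta[OF assms(2)] assms(1,2) unfolding common_indep_def by auto
  then show ?thesis using assms(3) card_le_Suc0_iff_eq by fastforce
qed

definition nonloop :: "'a \<Rightarrow> bool" where
  "nonloop e \<longleftrightarrow> e \<in> E \<and> {e} \<in> Ind"

lemma nonloop_if_indep: "J \<in> Ind \<Longrightarrow> e \<in> J \<Longrightarrow> nonloop e"
  unfolding nonloop_def using indep_subset_ground indep_subset by blast

lemma nonloop_notin_cl_empty: "nonloop e \<Longrightarrow> e \<notin> cl {}"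
  unfolding nonloop_def using notin_cl_if_indep_insert by fastforce

text \<open>Loops can never be used by a common independent set, so only non-loops count as top choices.\<close>
definition top_edges :: "'v \<Rightarrow> 'a set" where
  "top_edges v = {e \<in> \<delta> v. nonloop e \<and> (\<forall>g\<in>\<delta> v. nonloop g \<longrightarrow> \<not> pref v g e)}"

lemma top_edges_subset: "top_edges v \<subseteq> \<delta> v"
  unfolding top_edges_def by auto

lemma nonloop_if_top: "e \<in> top_edges v \<Longrightarrow> nonloop e"
  unfolding top_edges_def by auto

lemma not_pref_top: "g \<in> top_edges v \<Longrightarrow> x \<in> \<delta> v \<Longrightarrow> nonloop x \<Longrightarrow> \<not> pref v x g"
  unfolding top_edges_def by auto

lemma pref_top:
  assumes v: "v \<in> V" and g: "g \<in> top_edges v" and x: "x \<in> \<delta> v" "nonloop x" "x \<notin> top_edges v"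
  shows "pref v g x"
proof (rule ccontr)
  assume ng: "\<not> pref v g x"
  have gd: "g \<in> \<delta> v" "nonloop g" using g unfolding top_edges_def by auto
  obtain h where h: "h \<in> \<delta> v" "nonloop h" "pref v h x" using x unfolding top_edges_def by auto
  have "\<not> pref v g h" using pref_trans[OF v gd(1) h(1) x(1)] h(3) ng by blast
  then have "\<not> pref v h x"
    using indiff_trans[OF v h(1) gd(1) x(1)] not_pref_top[OF g] ng x h by blast
  then show False using h(3) by simp
qed

lemma top_edges_nonempty:
  assumes v: "v \<in> V" and x: "x \<in> \<delta> v" "nonloop x"
  shows "top_edges v \<noteq> {}"
proof -
  let ?above = "\<lambda>z. {g \<in> \<delta> v. nonloop g \<and> pref v g z}"
  obtain z where z: "z \<in> \<delta> v" "nonloop z"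
    and min: "\<And>y. y \<in> \<delta> v \<Longrightarrow> nonloop y \<Longrightarrow> card (?above z) \<le> card (?above y)"
    using ex_has_least_nat[of "\<lambda>z. z \<in> \<delta> v \<and> nonloop z" x "\<lambda>z. card (?above z)"] x by blast
  have "z \<in> top_edges v"
  proof (rule ccontr)
    assume "z \<notin> top_edges v"
    then obtain h where h: "h \<in> \<delta> v" "nonloop h" "pref v h z" using z unfolding top_edges_def by auto
    have "?above h \<subseteq> ?above z" using pref_trans[OF v _ h(1) z(1)] h(3) by blast
    moreover have "h \<in> ?above z" "h \<notin> ?above h" using h pref_irrefl[OF v h(1)] by auto
    ultimately have "?above h \<subset> ?above z" by blast
    then have "card (?above h) < card (?above z)"
      by (rule psubset_card_mono[rotated]) (use finite_delta[OF v] in auto)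
    then show False using min[OF h(1,2)] by simp
  qed
  then show ?thesis by blast
qed

definition matched_edge :: "'a set \<Rightarrow> 'v \<Rightarrow> 'a" where
  "matched_edge J v = (SOME x. x \<in> J \<inter> \<delta> v)"

lemma matched_edge_in: "J \<inter> \<delta> v \<noteq> {} \<Longrightarrow> matched_edge J v \<in> J \<inter> \<delta> v"
  unfolding matched_edge_def by (rule someI_ex) blast

lemma matched_edge_eq: "cis J \<Longrightarrow> v \<in> V \<Longrightarrow> x \<in> J \<inter> \<delta> v \<Longrightarrow> matched_edge J v = x"
  using cis_Int_delta matched_edge_in by blast

lemma matched_edge_inj:
  "u \<in> V \<Longrightarrow> w \<in> V \<Longrightarrow> J \<inter> \<delta> u \<noteq> {} \<Longrightarrow> J \<inter> \<delta> w \<noteq> {} \<Longrightarrow> matched_edge J u = matched_edge J w \<Longrightarrow> u = w"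
  using matched_edge_in delta_unique by (metis IntD2)

lemma card_Int_Union_delta:
  assumes "cis J" "W \<subseteq> V" "\<And>w. w \<in> W \<Longrightarrow> J \<inter> \<delta> w \<noteq> {}"
  shows "card (J \<inter> \<Union>(\<delta> ` W)) = card W"
proof -
  have "J \<inter> \<Union>(\<delta> ` W) = matched_edge J ` W"
    using matched_edge_in[OF assms(3)] matched_edge_eq[OF assms(1)] assms(2) by blast
  moreover have "inj_on (matched_edge J) W"
    using matched_edge_inj assms(2,3) by (meson inj_onI subsetD)
  ultimately show ?thesis by (simp add: card_image)
qed

definition deficient :: "'a set \<Rightarrow> 'v set" where
  "deficient J = {v \<in> V. J \<inter> \<delta> v \<inter> top_edges v = {}}"

definition better :: "'a set \<Rightarrow> 'v \<Rightarrow> 'a set" where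
  "better J v = {e \<in> \<delta> v. nonloop e \<and> (\<forall>x \<in> J \<inter> \<delta> v. pref v e x)}"

definition moves :: "'a set \<Rightarrow> 'v \<Rightarrow> 'a set" where
  "moves J v = (if v \<in> deficient J then better J v else top_edges v - J)"

lemma deficient_subset: "deficient J \<subseteq> V"
  unfolding deficient_def by auto

lemma moves_subset: "moves J v \<subseteq> \<delta> v"
  unfolding moves_def better_def using top_edges_subset by auto

lemma nonloop_if_move: "e \<in> moves J v \<Longrightarrow> nonloop e"
  unfolding moves_def better_def using nonloop_if_top by (auto split: if_splits)

lemma moves_disjoint: "v \<in> V \<Longrightarrow> e \<in> moves J v \<Longrightarrow> e \<notin> J"
  unfolding moves_def better_def using pref_irrefl by (auto split: if_splits)

lemma top_subset_better:
  assumes "cis J" "v \<in> deficient J"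
  shows "top_edges v \<subseteq> better J v"
proof
  fix g assume g: "g \<in> top_edges v"
  have v: "v \<in> V" using assms(2) deficient_subset by blast
  have "pref v g x" if "x \<in> J \<inter> \<delta> v" for x
    using pref_top[OF v g] that assms nonloop_if_indep[OF cis_indep[OF assms(1)]]
    unfolding deficient_def by blast
  then show "g \<in> better J v" using g top_edges_subset nonloop_if_top unfolding better_def by blast
qed

lemma top_subset_moves: "cis J \<Longrightarrow> top_edges v \<subseteq> moves J v \<union> J"
  using top_subset_better[of J v] unfolding moves_def by auto

lemma nondeficient_edge_top:
  assumes "cis J" "v \<in> V" "v \<notin> deficient J" "e \<in> J \<inter> \<delta> v"
  shows "e \<in> top_edges v"
  using cis_Int_delta[OF assms(1,2,4)] assms(2,3) unfolding deficient_def by auto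

lemma nondeficient_Int_delta: "v \<in> V \<Longrightarrow> v \<notin> deficient J \<Longrightarrow> J \<inter> \<delta> v \<noteq> {}"
  unfolding deficient_def by auto

definition exchange :: "'a set \<Rightarrow> 'v set \<Rightarrow> 'v set \<Rightarrow> ('v \<Rightarrow> 'a) \<Rightarrow> 'a set" where
  "exchange I W W' h = I - \<Union>(\<delta> ` W) \<union> h ` W'"

lemma exchange_Int_delta:
  assumes "W \<subseteq> V" "W' \<subseteq> W" "\<And>w. w \<in> W' \<Longrightarrow> h w \<in> \<delta> w" "u \<in> V"
  shows "exchange I W W' h \<inter> \<delta> u = (if u \<in> W' then {h u} else if u \<in> W then {} else I \<inter> \<delta> u)"
proof -
  have h: "h w \<in> \<delta> u \<longleftrightarrow> w = u" if "w \<in> W'" for w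
    using assms delta_unique that by blast
  have d: "e \<in> \<Union>(\<delta> ` W) \<longleftrightarrow> u \<in> W" if "e \<in> \<delta> u" for e
    using assms(1,4) delta_unique that by blast
  show ?thesis unfolding exchange_def using h d assms(2) by auto
qed

lemma cis_exchange:
  assumes I: "cis I" and W: "W \<subseteq> V" "W' \<subseteq> W" and h: "\<And>w. w \<in> W' \<Longrightarrow> h w \<in> \<delta> w"
    and J: "exchange I W W' h \<in> Ind"
  shows "cis (exchange I W W' h)"
  unfolding common_indep_def
proof (intro conjI ballI J)
  fix u assume u: "u \<in> V"
  show "card (exchange I W W' h \<inter> \<delta> u) \<le> 1"
    using exchange_Int_delta[OF W h u] I u unfolding common_indep_def by auto
qed

lemma prefers_to_exchange:
  assumes I: "cis I" and W: "W \<subseteq> V" "W' \<subseteq> W" and h: "\<And>w. w \<in> W' \<Longrightarrow> h w \<in> moves I w"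
    and v: "v \<in> V" "prefers \<delta> pref v I (exchange I W W' h)"
  shows "v \<in> W - W'"
proof -
  have hd: "\<And>w. w \<in> W' \<Longrightarrow> h w \<in> \<delta> w" using h moves_subset by blast
  note J_at = exchange_Int_delta[OF W hd v(1)]
  have "v \<in> W"
  proof (rule ccontr)
    assume "v \<notin> W"
    then have "exchange I W W' h \<inter> \<delta> v = I \<inter> \<delta> v" using J_at W(2) by auto
    then show False using v not_prefers_if_same_at by simp
  qed
  moreover have "v \<notin> W'"
  proof
    assume vW': "v \<in> W'"
    then obtain x where x: "I \<inter> \<delta> v = {x}" "pref v x (h v)"
      using v(2) J_at unfolding prefers_def by auto
    show False
    proof (cases "v \<in> deficient I")
      case True
      then have "pref v (h v) x" using h[OF vW'] x(1) unfolding moves_def better_def by auto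
      then show False using pref_trans[OF v(1) _ hd[OF vW'] _] x pref_irrefl[OF v(1)] by blast
    next
      case False
      then have "h v \<in> top_edges v" using h[OF vW'] unfolding moves_def by auto
      then show False using not_pref_top nonloop_if_indep[OF cis_indep[OF I]] x by blast
    qed
  qed
  ultimately show ?thesis by blast
qed

lemma deficient_prefers_exchange:
  assumes I: "cis I" and W: "W \<subseteq> V" "W' \<subseteq> W" and h: "\<And>w. w \<in> W' \<Longrightarrow> h w \<in> moves I w"
    and w: "w \<in> W'" "w \<in> deficient I"
  shows "prefers \<delta> pref w (exchange I W W' h) I"
proof -
  have hd: "\<And>w. w \<in> W' \<Longrightarrow> h w \<in> \<delta> w" using h moves_subset by blast
  have wV: "w \<in> V" using w W by blast
  have "h w \<in> better I w" using h[OF w(1)] w(2) unfolding moves_def by simp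
  then show ?thesis
    using exchange_Int_delta[OF W hd wV] w cis_Int_delta[OF I wV] unfolding prefers_def better_def by auto
qed

lemma exchange_not_popular:
  assumes I: "cis I" and W: "W \<subseteq> V" "W' \<subseteq> W" and h: "\<And>w. w \<in> W' \<Longrightarrow> h w \<in> moves I w"
    and J: "exchange I W W' h \<in> Ind"
    and gain: "card (W - W') < card (W' \<inter> deficient I)"
  shows "\<not> popular Ind V \<delta> pref I"
proof -
  have "phi V \<delta> pref I (exchange I W W' h) \<le> card (W - W')"
    unfolding phi_def using prefers_to_exchange[OF I W h]
    by (intro card_mono) (use W finite_V finite_subset in blast)+
  also have "\<dots> < card (W' \<inter> deficient I)" by (rule gain)
  also have "\<dots> \<le> phi V \<delta> pref (exchange I W W' h) I"
    unfolding phi_def using deficient_prefers_exchange[OF I W h] W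
    by (intro card_mono) (use finite_V in auto)
  finally have "phi V \<delta> pref I (exchange I W W' h) < phi V \<delta> pref (exchange I W W' h) I" .
  moreover have "cis (exchange I W W' h)" using cis_exchange[OF I W _ J] h moves_subset by blast
  ultimately show ?thesis unfolding popular_def by (meson leD)
qed

end

section \<open>Alternating paths\<close>

context popularity
begin

definition replaces :: "'a set \<Rightarrow> 'a \<Rightarrow> 'v \<Rightarrow> bool" where
  "replaces I e w \<longleftrightarrow> w \<in> V \<and> I \<inter> \<delta> w \<noteq> {} \<and> insert e (I - {matched_edge I w}) \<in> Ind"

definition alt_path :: "'a set \<Rightarrow> 'v \<Rightarrow> nat \<Rightarrow> (nat \<Rightarrow> 'v) \<Rightarrow> (nat \<Rightarrow> 'a) \<Rightarrow> bool" where
  "alt_path I s m v y \<longleftrightarrow> v 0 = s \<and> (\<forall>i<m. y i \<in> moves I (v i) \<and> replaces I (y i) (v (Suc i)))"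

definition path_to :: "'a set \<Rightarrow> 'v \<Rightarrow> ('v \<Rightarrow> 'a \<Rightarrow> bool) \<Rightarrow> nat \<Rightarrow> (nat \<Rightarrow> 'v) \<Rightarrow> (nat \<Rightarrow> 'a) \<Rightarrow> bool" where
  "path_to I s F m v y \<longleftrightarrow> alt_path I s m v y \<and> y m \<in> moves I (v m) \<and> F (v m) (y m)"

lemma alt_path_vertex: "alt_path I s m v y \<Longrightarrow> s \<in> V \<Longrightarrow> i \<le> m \<Longrightarrow> v i \<in> V"
  unfolding alt_path_def replaces_def by (cases i) auto

lemma alt_path_matched: "alt_path I s m v y \<Longrightarrow> i < m \<Longrightarrow> I \<inter> \<delta> (v (Suc i)) \<noteq> {}"
  unfolding alt_path_def replaces_def by auto

lemma alt_path_move: "alt_path I s m v y \<Longrightarrow> y m \<in> moves I (v m) \<Longrightarrow> i \<le> m \<Longrightarrow> y i \<in> moves I (v i)"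
  unfolding alt_path_def by (cases "i = m") auto

lemma alt_path_prefix: "alt_path I s m v y \<Longrightarrow> i \<le> m \<Longrightarrow> alt_path I s i v y"
  unfolding alt_path_def by auto

lemma alt_path_upd: "alt_path I s m v y \<Longrightarrow> alt_path I s m v (y(m := e))"
  unfolding alt_path_def by auto

lemma alt_path_snoc:
  "alt_path I s m v y \<Longrightarrow> y m \<in> moves I (v m) \<Longrightarrow> replaces I (y m) u \<Longrightarrow> alt_path I s (Suc m) (v(Suc m := u)) y"
  unfolding alt_path_def by (auto simp: less_Suc_eq)

lemma alt_path_shortcut:
  assumes p: "alt_path I s m v y" and ab: "a \<le> b" "b < m"
    and e: "e \<in> moves I (v a)" "replaces I e (v (Suc b))"
  shows "alt_path I s (m - (b - a)) (\<lambda>k. if k \<le> a then v k else v (k + (b - a)))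
                 (\<lambda>k. if k < a then y k else if k = a then e else y (k + (b - a)))"
    (is "alt_path I s _ ?v ?y")
proof -
  have "?y k \<in> moves I (?v k) \<and> replaces I (?y k) (?v (Suc k))" if k: "k < m - (b - a)" for k
  proof -
    consider "k < a" | "k = a" | "a < k" by linarith
    then show ?thesis
    proof cases
      case 1 then show ?thesis using p ab unfolding alt_path_def by auto
    next
      case 2 then show ?thesis using e ab by auto
    next
      case 3
      then have "k + (b - a) < m" using k ab by simp
      then show ?thesis using p 3 unfolding alt_path_def by auto
    qed
  qed
  then show ?thesis using p unfolding alt_path_def by simp
qed

lemma shortest_path_to:
  assumes "path_to I s F m v y"
  obtains m v y where "path_to I s F m v y" "inj_on v {..m}"
    "\<And>i j. i < j \<Longrightarrow> j < m \<Longrightarrow> \<not> replaces I (y i) (v (Suc j))" "\<And>i. i < m \<Longrightarrow> \<not> F (v i) (y i)"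
proof -
  obtain m where m: "\<exists>v y. path_to I s F m v y" and least: "\<And>k. k < m \<Longrightarrow> \<not> (\<exists>v y. path_to I s F k v y)"
    using assms exists_least_iff[of "\<lambda>m. \<exists>v y. path_to I s F m v y"] by blast
  then obtain v y where b: "path_to I s F m v y" by blast
  then have p: "alt_path I s m v y" and ym: "y m \<in> moves I (v m)" and Fm: "F (v m) (y m)"
    unfolding path_to_def by auto
  have shortcut: "\<not> replaces I e (v (Suc b))" if ab: "a < b" "b < m" and e: "e \<in> moves I (v a)" for a b e
  proof
    assume "replaces I e (v (Suc b))"
    from alt_path_shortcut[OF p _ ab(2) e this] ym Fm ab
    have "path_to I s F (m - (b - a)) (\<lambda>k. if k \<le> a then v k else v (k + (b - a)))
          (\<lambda>k. if k < a then y k else if k = a then e else y (k + (b - a)))"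
      unfolding path_to_def by auto
    then show False using least[of "m - (b - a)"] ab by auto
  qed
  have "v a \<noteq> v b" if ab: "a < b" "b \<le> m" for a b
  proof
    assume eq: "v a = v b"
    show False
    proof (cases "b < m")
      case True
      then show False using shortcut[of a b "y b"] p eq ab unfolding alt_path_def by auto
    next
      case False
      then have "path_to I s F a v (y(a := y m))"
        using alt_path_upd[OF alt_path_prefix[OF p]] ym Fm eq ab unfolding path_to_def by auto
      then show False using least[of a] ab False by auto
    qed
  qed
  then have "inj_on v {..m}"
    by (intro inj_onI) (metis atMost_iff linorder_neqE_nat)
  moreover have "\<not> replaces I (y i) (v (Suc j))" if "i < j" "j < m" for i j
    using shortcut[of i j "y i"] alt_path_move[OF p ym, of i] that by auto
  moreover have "\<not> F (v i) (y i)" if "i < m" for i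
    using least[of i] alt_path_prefix[OF p, of i] alt_path_move[OF p ym, of i] that
    unfolding path_to_def by auto
  ultimately show ?thesis using that b by blast
qed

lemma path_edge_fun:
  assumes "inj_on v {..m}"
  obtains h where "\<And>i. i \<le> m \<Longrightarrow> h (v i) = y i" "h ` v ` {..m} = y ` {..m}"
proof -
  define h where "h w = y (inv_into {..m} v w)" for w
  have hv: "h (v i) = y i" if "i \<le> m" for i
    using inv_into_f_f[OF assms] that unfolding h_def by simp
  moreover have "h ` v ` {..m} = y ` {..m}"
    unfolding image_image using hv by (intro image_cong) auto
  ultimately show ?thesis by (rule that)
qed

lemma path_exchange_not_popular:
  assumes I: "cis I" and s: "s \<in> deficient I" and p: "alt_path I s m v y" "y m \<in> moves I (v m)"
    and inj: "inj_on v {..m}" and J: "I - \<Union>(\<delta> ` v ` {..m}) \<union> y ` {..m} \<in> Ind"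
  shows "\<not> popular Ind V \<delta> pref I"
proof -
  obtain h where hv: "\<And>i. i \<le> m \<Longrightarrow> h (v i) = y i" and img: "h ` v ` {..m} = y ` {..m}"
    using path_edge_fun[OF inj, of y] by blast
  have W: "v ` {..m} \<subseteq> V"
    using alt_path_vertex[OF p(1)] s deficient_subset by blast
  have "h w \<in> moves I w" if "w \<in> v ` {..m}" for w
    using hv alt_path_move[OF p] that by auto
  moreover have "exchange I (v ` {..m}) (v ` {..m}) h \<in> Ind"
    using J img unfolding exchange_def by simp
  moreover have "s \<in> v ` {..m} \<inter> deficient I" using p(1) s unfolding alt_path_def by force
  then have "card (v ` {..m} - v ` {..m}) < card (v ` {..m} \<inter> deficient I)"
    by (auto simp: card_gt_0_iff)
  ultimately show ?thesis using exchange_not_popular[OF I W subset_refl] by blast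
qed

lemma closed_path_indep:
  assumes I: "cis I" and p: "alt_path I s m v y" "y m \<in> moves I (v m)" and s: "s \<in> V"
    and u: "replaces I (y m) u"
    and no_short: "\<And>i j. i < j \<Longrightarrow> j < m \<Longrightarrow> \<not> replaces I (y i) (v (Suc j))"
    and no_short_u: "\<And>i. i < m \<Longrightarrow> \<not> replaces I (y i) u"
  shows "I - \<Union>(\<delta> ` insert u (v ` {..m})) \<union> y ` {..m} \<in> Ind"
proof -
  define v' where "v' = v(Suc m := u)"
  have p': "alt_path I s (Suc m) v' y" unfolding v'_def by (rule alt_path_snoc[OF p u])
  define x where "x i = matched_edge I (v' (Suc i))" for i
  have x: "x i \<in> I \<inter> \<delta> (v' (Suc i))" if "i < Suc m" for i
    using matched_edge_in alt_path_matched[OF p' that] unfolding x_def by blast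
  have y: "y i \<notin> I" if "i < Suc m" for i
    using moves_disjoint[OF alt_path_vertex[OF p(1) s, of i] alt_path_move[OF p, of i]] that by simp
  have exch: "insert (y i) (I - {x i}) \<in> Ind" if "i < Suc m" for i
    using p' that unfolding alt_path_def replaces_def x_def by blast
  have no_exch: "insert (y i) (I - {x j}) \<notin> Ind" if ij: "i < j" "j < Suc m" for i j
  proof
    assume "insert (y i) (I - {x j}) \<in> Ind"
    then have "replaces I (y i) (v' (Suc j))"
      using alt_path_vertex[OF p' s, of "Suc j"] alt_path_matched[OF p', of j] ij
      unfolding replaces_def x_def by auto
    then show False using no_short[OF ij(1)] no_short_u[of i] ij unfolding v'_def
      by (cases "j < m") auto
  qed
  have indep: "I - x ` {..<Suc m} \<union> y ` {..<Suc m} \<in> Ind"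
    by (rule unique_matching_exchange[OF cis_indep[OF I]]) (use x y exch no_exch in auto)
  have "v' (Suc i) \<in> insert u (v ` {..m})" if "i < Suc m" for i
    using that unfolding v'_def by auto
  then have "x ` {..<Suc m} \<subseteq> \<Union>(\<delta> ` insert u (v ` {..m}))" using x by blast
  then have "I - \<Union>(\<delta> ` insert u (v ` {..m})) \<union> y ` {..m} \<subseteq> I - x ` {..<Suc m} \<union> y ` {..<Suc m}"
    by (auto simp: lessThan_Suc_atMost)
  then show ?thesis by (rule indep_subset[OF indep])
qed

lemma no_path_to_free:
  assumes I: "cis I" and pop: "popular Ind V \<delta> pref I" and s: "s \<in> deficient I"
  shows "\<not> path_to I s (\<lambda>w e. insert e I \<in> Ind) m v y"
proof
  assume "path_to I s (\<lambda>w e. insert e I \<in> Ind) m v y"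
  then obtain m v y where p: "alt_path I s m v y" "y m \<in> moves I (v m)"
    and free: "insert (y m) I \<in> Ind" and inj: "inj_on v {..m}"
    and no_short: "\<And>i j. i < j \<Longrightarrow> j < m \<Longrightarrow> \<not> replaces I (y i) (v (Suc j))"
    and dep: "\<And>i. i < m \<Longrightarrow> insert (y i) I \<notin> Ind"
    by (rule shortest_path_to) (auto simp: path_to_def)
  have sV: "s \<in> V" using s deficient_subset by blast
  define x where "x i = matched_edge I (v (Suc i))" for i
  have x: "x i \<in> I \<inter> \<delta> (v (Suc i))" if "i < m" for i
    using matched_edge_in alt_path_matched[OF p(1) that] unfolding x_def by blast
  have y: "y i \<notin> I" if "i \<le> m" for i
    using moves_disjoint[OF alt_path_vertex[OF p(1) sV, of i] alt_path_move[OF p, of i]] that by simp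
  have no_exch: "insert (y i) (I - {x j}) \<notin> Ind" if ij: "i < j" "j < m" for i j
    using no_short[OF ij] alt_path_vertex[OF p(1) sV, of "Suc j"] alt_path_matched[OF p(1), of j] ij
    unfolding replaces_def x_def by auto
  have indep: "insert (y m) (I - x ` {..<m} \<union> y ` {..<m}) \<in> Ind"
    by (rule unique_matching_exchange_insert[OF cis_indep[OF I]])
      (use x y no_exch free dep p(1) in \<open>auto simp: alt_path_def replaces_def x_def\<close>)
  have "x ` {..<m} \<subseteq> \<Union>(\<delta> ` v ` {..m})" using x by (force simp: Suc_le_eq)
  then have "I - \<Union>(\<delta> ` v ` {..m}) \<union> y ` {..m} \<subseteq> insert (y m) (I - x ` {..<m} \<union> y ` {..<m})"
    by (auto simp: le_less)
  then have "I - \<Union>(\<delta> ` v ` {..m}) \<union> y ` {..m} \<in> Ind" by (rule indep_subset[OF indep])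
  then show False using path_exchange_not_popular[OF I s p inj] pop by blast
qed

lemma no_path_to_start:
  assumes I: "cis I" and pop: "popular Ind V \<delta> pref I" and s: "s \<in> deficient I"
  shows "\<not> path_to I s (\<lambda>w e. replaces I e s) m v y"
proof
  assume "path_to I s (\<lambda>w e. replaces I e s) m v y"
  then obtain m v y where p: "alt_path I s m v y" "y m \<in> moves I (v m)"
    and closes: "replaces I (y m) s" and inj: "inj_on v {..m}"
    and no_short: "\<And>i j. i < j \<Longrightarrow> j < m \<Longrightarrow> \<not> replaces I (y i) (v (Suc j))"
    and no_back: "\<And>i. i < m \<Longrightarrow> \<not> replaces I (y i) s"
    by (rule shortest_path_to) (auto simp: path_to_def)
  have sV: "s \<in> V" using s deficient_subset by blast
  have "I - \<Union>(\<delta> ` insert s (v ` {..m})) \<union> y ` {..m} \<in> Ind"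
    by (rule closed_path_indep[OF I p sV closes no_short no_back])
  moreover have "insert s (v ` {..m}) = v ` {..m}" using p(1) unfolding alt_path_def by force
  ultimately show False using path_exchange_not_popular[OF I s p inj] pop by simp
qed

lemma alt_path_moves_inj:
  assumes p: "alt_path I s m v y" "y m \<in> moves I (v m)" and s: "s \<in> V" and inj: "inj_on v {..m}"
  shows "inj_on y {..m}"
proof (rule inj_onI)
  fix i j assume ij: "i \<in> {..m}" "j \<in> {..m}" "y i = y j"
  have "y i \<in> \<delta> (v i)" "y j \<in> \<delta> (v j)"
    using alt_path_move[OF p, of i] alt_path_move[OF p, of j] moves_subset ij(1,2) by auto
  then have "v i = v j" using delta_unique alt_path_vertex[OF p(1) s] ij by auto
  then show "i = j" using inj_onD[OF inj] ij by blast
qed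

lemma exchange_two_deficient_not_popular:
  assumes I: "cis I" and W: "W \<subseteq> V" "W' \<subseteq> W" and h: "\<And>w. w \<in> W' \<Longrightarrow> h w \<in> moves I w"
    and J: "exchange I W W' h \<in> Ind" and lost: "card (W - W') \<le> 1"
    and st: "s \<in> W' \<inter> deficient I" "t \<in> W' \<inter> deficient I" "s \<noteq> t"
  shows "\<not> popular Ind V \<delta> pref I"
proof -
  have "finite (W' \<inter> deficient I)"
    by (rule finite_subset[OF _ finite_V]) (use deficient_subset in blast)
  then have "card {s, t} \<le> card (W' \<inter> deficient I)"
    by (rule card_mono) (use st in auto)
  then show ?thesis using exchange_not_popular[OF I W h J] lost st(3) by simp
qed

text \<open>A simple path from the deficient vertex \<open>s\<close> whose last move displaces the edge of another
  deficient vertex \<open>t\<close>, which is then rematched along \<open>y'\<close>.\<close>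
context
  fixes I s t m v y h y'
  assumes I: "cis I" and s: "s \<in> deficient I" and t: "t \<in> deficient I" "t \<noteq> s"
    and p: "alt_path I s m v y" "y m \<in> moves I (v m)" and inj: "inj_on v {..m}"
    and avoid: "\<And>i. i \<le> m \<Longrightarrow> v i \<noteq> t"
    and h: "\<And>i. i \<le> m \<Longrightarrow> h (v i) = y i" and y': "y' \<in> moves I t"
begin

private lemma sV: "s \<in> V" and tV: "t \<in> V"
  using s t deficient_subset by auto

private lemma path_W: "insert t (v ` {..m}) \<subseteq> V"
  using alt_path_vertex[OF p(1) sV] tV by auto

private lemma path_h_moves: "w \<in> insert t (v ` {..m}) \<Longrightarrow> (h(t := y')) w \<in> moves I w"
  using h alt_path_move[OF p] avoid y' by auto

private lemma path_h_image:
  assumes "A \<subseteq> {..m}"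
  shows "(h(t := y')) ` insert t (v ` A) = insert y' (y ` A)"
proof -
  have "t \<notin> v ` A" using assms avoid by auto
  then have "(h(t := y')) ` v ` A = h ` v ` A" by (intro image_cong) auto
  also have "\<dots> = y ` A" unfolding image_image using assms h by (intro image_cong) auto
  finally show ?thesis by (metis fun_upd_same image_insert)
qed

private lemma path_s_t: "s \<in> v ` {..m}" "s \<noteq> t"
  using p(1) t(2) unfolding alt_path_def by force+

lemma closed_path_augment_not_popular:
  assumes "insert y' (I - \<Union>(\<delta> ` insert t (v ` {..m})) \<union> y ` {..m}) \<in> Ind"
  shows "\<not> popular Ind V \<delta> pref I"
proof (rule exchange_two_deficient_not_popular[OF I path_W subset_refl path_h_moves])
  show "exchange I (insert t (v ` {..m})) (insert t (v ` {..m})) (h(t := y')) \<in> Ind"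
    using assms path_h_image[of "{..m}"] unfolding exchange_def by simp
qed (use s t path_s_t in auto)

lemma closed_path_swap_move_not_popular:
  assumes i: "i \<in> {1..m}"
    and J: "insert y' (I - \<Union>(\<delta> ` insert t (v ` {..m})) \<union> y ` {..m} - {y i}) \<in> Ind"
  shows "\<not> popular Ind V \<delta> pref I"
proof -
  let ?W' = "insert t (v ` ({..m} - {i}))"
  have "v i \<noteq> s" using inj_onD[OF inj, of i 0] i p(1) unfolding alt_path_def by auto
  then have W': "?W' = insert t (v ` {..m}) - {v i}" "s \<in> ?W'"
    using avoid[of i] i inj_on_image_set_diff[OF inj, of "{..m}" "{i}"] path_s_t by auto
  have "y ` ({..m} - {i}) = y ` {..m} - {y i}"
    using inj_on_image_set_diff[OF alt_path_moves_inj[OF p sV inj], of "{..m}" "{i}"] i by auto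
  moreover have "y i \<notin> I"
    using moves_disjoint[OF alt_path_vertex[OF p(1) sV] alt_path_move[OF p]] i by auto
  ultimately have J': "exchange I (insert t (v ` {..m})) ?W' (h(t := y')) \<in> Ind"
    using J path_h_image[of "{..m} - {i}"] unfolding exchange_def by (simp add: insert_Diff_if Un_Diff)
  have "insert t (v ` {..m}) - ?W' \<subseteq> {v i}" using W' by auto
  then have lost: "card (insert t (v ` {..m}) - ?W') \<le> 1" using card_mono[of "{v i}"] by fastforce
  have sub: "?W' \<subseteq> insert t (v ` {..m})" using W'(1) by blast
  have hm: "(h(t := y')) w \<in> moves I w" if "w \<in> ?W'" for w
    using path_h_moves sub that by blast
  have st: "s \<in> ?W' \<inter> deficient I" "t \<in> ?W' \<inter> deficient I" using W'(2) s t by blast+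
  show ?thesis by (rule exchange_two_deficient_not_popular[OF I path_W sub hm J' lost st path_s_t(2)])
qed

lemma closed_path_swap_outside_not_popular:
  assumes z: "z \<in> I - \<Union>(\<delta> ` insert t (v ` {..m}))"
    and J: "insert y' (I - \<Union>(\<delta> ` insert t (v ` {..m})) \<union> y ` {..m} - {z}) \<in> Ind"
  shows "\<not> popular Ind V \<delta> pref I"
proof -
  have "z \<in> E" using z indep_subset_ground[OF cis_indep[OF I]] by blast
  then obtain u where u: "u \<in> V" "z \<in> \<delta> u" using delta_cover by blast
  then have u_new: "u \<notin> insert t (v ` {..m})" using z by blast
  have "I \<inter> \<delta> u = {z}" using cis_Int_delta[OF I u(1)] z u by blast
  then have "I - \<Union>(\<delta> ` insert u (insert t (v ` {..m}))) = I - \<Union>(\<delta> ` insert t (v ` {..m})) - {z}"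
    by auto
  moreover have "z \<notin> y ` {..m}"
    using z moves_disjoint[OF alt_path_vertex[OF p(1) sV] alt_path_move[OF p]] by auto
  moreover have "z \<noteq> y'" using z moves_disjoint[OF tV y'] by auto
  ultimately have J': "exchange I (insert u (insert t (v ` {..m}))) (insert t (v ` {..m})) (h(t := y')) \<in> Ind"
    using J path_h_image[of "{..m}"] unfolding exchange_def by (simp add: Un_Diff insert_Diff_if)
  have "insert u (insert t (v ` {..m})) - insert t (v ` {..m}) \<subseteq> {u}" by blast
  then have lost: "card (insert u (insert t (v ` {..m})) - insert t (v ` {..m})) \<le> 1"
    using card_mono[of "{u}"] by fastforce
  have W: "insert u (insert t (v ` {..m})) \<subseteq> V" using path_W u(1) by blast
  have st: "s \<in> insert t (v ` {..m}) \<inter> deficient I" "t \<in> insert t (v ` {..m}) \<inter> deficient I"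
    using path_s_t(1) s t by blast+
  show ?thesis
    by (rule exchange_two_deficient_not_popular[OF I W _ path_h_moves J' lost st path_s_t(2)]) blast
qed

text \<open>If \<open>y'\<close> is parallel to the first move, it can replace the edge at \<open>v 1\<close> as well, and the
  path started at \<open>t\<close> along \<open>y'\<close> closes at \<open>t\<close>.\<close>
lemma closed_path_parallel_cycle:
  assumes closes: "replaces I (y m) t" and par: "y' \<in> cl {y 0}"
  shows "path_to I t (\<lambda>w e. replaces I e t) m (v(Suc m := t, 0 := t)) (y(0 := y'))"
proof -
  let ?v = "v(Suc m := t)"
  have p': "alt_path I s (Suc m) ?v y" by (rule alt_path_snoc[OF p closes])
  then have first: "replaces I (y 0) (?v 1)" unfolding alt_path_def by auto
  define X where "X = insert (y 0) (I - {matched_edge I (?v 1)})"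
  have X: "X \<in> Ind" using first unfolding replaces_def X_def by simp
  have y0: "y 0 \<in> \<delta> s" "y 0 \<notin> I"
    using alt_path_move[OF p, of 0] moves_subset moves_disjoint[OF sV] p(1) unfolding alt_path_def by auto
  have "y' \<in> \<delta> t" "y' \<notin> I" using y' moves_subset moves_disjoint[OF tV] by auto
  then have "y' \<notin> X" using y0 delta_unique[OF sV tV] t(2) unfolding X_def by auto
  then have "insert y' (X - {y 0}) \<in> Ind"
    using indep_swap_parallel[OF X _ _ _ par nonloop_notin_cl_empty] y' nonloop_if_move
    unfolding X_def nonloop_def by auto
  moreover have "X - {y 0} = I - {matched_edge I (?v 1)}" using y0 unfolding X_def by auto
  ultimately have "replaces I y' (?v 1)" using first unfolding replaces_def by simp
  then show ?thesis
    using p closes y' unfolding path_to_def alt_path_def by (auto simp: nat.split_sels(2))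
qed


lemma closed_path_not_popular:
  assumes closes: "replaces I (y m) t"
    and J0: "I - \<Union>(\<delta> ` insert t (v ` {..m})) \<union> y ` {..m} \<in> Ind"
  shows "\<not> popular Ind V \<delta> pref I"
proof
  assume pop: "popular Ind V \<delta> pref I"
  define J where "J = I - \<Union>(\<delta> ` insert t (v ` {..m})) \<union> y ` {..m}"
  have J: "J \<in> Ind" using J0 unfolding J_def .
  have "y' \<notin> J"
    using y' moves_disjoint[OF tV] moves_subset alt_path_move[OF p] delta_unique[OF tV]
      alt_path_vertex[OF p(1) sV] avoid unfolding J_def by fastforce
  moreover have "insert y' J \<notin> Ind" using closed_path_augment_not_popular pop unfolding J_def by blast
  ultimately have y'_cl: "y' \<in> cl {z \<in> J. insert y' (J - {z}) \<in> Ind}"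
    using in_cl_replaceable[OF J] in_cl_if_dep_insert[OF J] y' moves_subset delta_subset[OF tV] by blast
  have "z = y 0" if z: "z \<in> J" "insert y' (J - {z}) \<in> Ind" for z
  proof (rule ccontr)
    assume "z \<noteq> y 0"
    moreover have "{..m} = insert 0 {1..m}" by auto
    ultimately have "z \<in> I - \<Union>(\<delta> ` insert t (v ` {..m})) \<or> z \<in> y ` {1..m}"
      using z(1) unfolding J_def by auto
    then show False
      using closed_path_swap_outside_not_popular closed_path_swap_move_not_popular z(2) pop
      unfolding J_def by blast
  qed
  then have "{z \<in> J. insert y' (J - {z}) \<in> Ind} \<subseteq> {y 0}" by blast
  then have "y' \<in> cl {y 0}" using cl_mono y'_cl by blast
  then show False
    using closed_path_parallel_cycle[OF closes] no_path_to_start[OF I pop t(1)] by blast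
qed

end

lemma no_path_to_other_deficient:
  assumes I: "cis I" and pop: "popular Ind V \<delta> pref I" and s: "s \<in> deficient I"
  shows "\<not> path_to I s (\<lambda>w e. \<exists>t \<in> deficient I - {s}. replaces I e t) m v y"
proof
  assume "path_to I s (\<lambda>w e. \<exists>t \<in> deficient I - {s}. replaces I e t) m v y"
  then obtain m v y where p: "alt_path I s m v y" "y m \<in> moves I (v m)" and inj: "inj_on v {..m}"
    and no_short: "\<And>i j. i < j \<Longrightarrow> j < m \<Longrightarrow> \<not> replaces I (y i) (v (Suc j))"
    and no_other: "\<And>i. i < m \<Longrightarrow> \<not> (\<exists>t \<in> deficient I - {s}. replaces I (y i) t)"
    and last: "\<exists>t \<in> deficient I - {s}. replaces I (y m) t"
    by (rule shortest_path_to) (auto simp: path_to_def)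
  then obtain t where t: "t \<in> deficient I" "t \<noteq> s" and closes: "replaces I (y m) t" by blast
  have sV: "s \<in> V" and tV: "t \<in> V" using s t deficient_subset by auto
  have avoid: "v i \<noteq> t" if "i \<le> m" for i
  proof (cases i)
    case 0
    then show ?thesis using p(1) t(2) unfolding alt_path_def by auto
  next
    case (Suc j)
    then have "replaces I (y j) (v i)" using p(1) that unfolding alt_path_def by auto
    then show ?thesis using no_other[of j] t Suc that by auto
  qed
  have J0: "I - \<Union>(\<delta> ` insert t (v ` {..m})) \<union> y ` {..m} \<in> Ind"
    by (rule closed_path_indep[OF I p sV closes no_short]) (use no_other t in auto)
  obtain h where h: "\<And>i. i \<le> m \<Longrightarrow> h (v i) = y i" using path_edge_fun[OF inj, of y] by blast
  obtain y' where y't: "y' \<in> top_edges t"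
    using top_edges_nonempty[OF tV] closes nonloop_if_indep[OF cis_indep[OF I]]
    unfolding replaces_def by blast
  then have y': "y' \<in> moves I t" using top_subset_better[OF I t(1)] t unfolding moves_def by auto
  from closed_path_not_popular[where I=I and s=s and t=t and m=m and v=v and y=y and h=h and y'=y',
      OF I s t p inj avoid h y' closes J0]
  show False using pop by blast
qed

end

section \<open>The critical set and a certificate for popularity\<close>

context popularity
begin

definition reachable :: "'a set \<Rightarrow> 'v set" where
  "reachable I = {w. \<exists>s\<in>deficient I. \<exists>m v y. alt_path I s m v y \<and> v m = w}"

lemma deficient_subset_reachable: "deficient I \<subseteq> reachable I"
proof
  fix s assume "s \<in> deficient I"
  moreover have "alt_path I s 0 (\<lambda>_. s) y" for y :: "nat \<Rightarrow> 'a" unfolding alt_path_def by simp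
  ultimately show "s \<in> reachable I" unfolding reachable_def by blast
qed

lemma reachable_subset: "reachable I \<subseteq> V"
  unfolding reachable_def using alt_path_vertex deficient_subset by blast

lemma move_in_cl_reachable:
  assumes I: "cis I" and pop: "popular Ind V \<delta> pref I" and w: "w \<in> reachable I" and e: "e \<in> moves I w"
  shows "e \<in> cl (I \<inter> \<Union>(\<delta> ` (reachable I - deficient I)))"
proof -
  obtain s m v y where s: "s \<in> deficient I" and p: "alt_path I s m v y" and vm: "v m = w"
    using w unfolding reachable_def by blast
  have p': "alt_path I s m v (y(m := e))" and ym: "(y(m := e)) m \<in> moves I (v m)"
    using alt_path_upd[OF p] e vm by auto
  have wV: "w \<in> V" using w reachable_subset by blast
  have eI: "e \<notin> I" and eE: "e \<in> E" using moves_disjoint[OF wV e] moves_subset delta_subset[OF wV] e by auto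
  have "insert e I \<notin> Ind"
    using no_path_to_free[OF I pop s, of m v "y(m := e)"] p' ym unfolding path_to_def by auto
  then have "e \<in> cl I" using in_cl_if_dep_insert[OF cis_indep[OF I] eE eI] by blast
  then have e_cl: "e \<in> cl {x \<in> I. insert e (I - {x}) \<in> Ind}"
    using in_cl_replaceable[OF cis_indep[OF I] _ eI] by blast
  have "{x \<in> I. insert e (I - {x}) \<in> Ind} \<subseteq> I \<inter> \<Union>(\<delta> ` (reachable I - deficient I))"
  proof safe
    fix x assume x: "x \<in> I" "insert e (I - {x}) \<in> Ind"
    obtain u where u: "u \<in> V" "x \<in> \<delta> u"
      using delta_cover indep_subset_ground[OF cis_indep[OF I]] x(1) by blast
    have "replaces I e u"
      using u x matched_edge_eq[OF I u(1)] unfolding replaces_def by auto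
    then have rep: "replaces I ((y(m := e)) m) u" by simp
    have "alt_path I s (Suc m) (v(Suc m := u)) (y(m := e))" by (rule alt_path_snoc[OF p' ym rep])
    then have "u \<in> reachable I" unfolding reachable_def using s by fastforce
    moreover have "u \<notin> deficient I"
    proof
      assume "u \<in> deficient I"
      then have "path_to I s (\<lambda>w e. replaces I e s) m v (y(m := e)) \<or>
          path_to I s (\<lambda>w e. \<exists>t \<in> deficient I - {s}. replaces I e t) m v (y(m := e))"
        using p' ym rep unfolding path_to_def by (cases "u = s") auto
      then show False
        using no_path_to_start[OF I pop s] no_path_to_other_deficient[OF I pop s] by blast
    qed
    ultimately show "x \<in> \<Union>(\<delta> ` (reachable I - deficient I))" using u by blast
  qed
  then show ?thesis using cl_mono e_cl by blast
qed

definition top_union :: "'v set \<Rightarrow> 'a set" where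
  "top_union A = \<Union>(top_edges ` A)"

text \<open>An upper bound on the number of vertices that a common independent set can match along top
  edges: those of \<open>A\<close>, plus at most \<open>rk\<close> of the top edges of the rest.\<close>
definition top_bound :: "'v set \<Rightarrow> nat" where
  "top_bound A = card A + rk (top_union (V - A))"

lemma top_union_subset: "A \<subseteq> V \<Longrightarrow> top_union A \<subseteq> E"
  unfolding top_union_def using top_edges_subset delta_subset by blast

lemma card_nondeficient_le_top_bound:
  assumes I: "cis I" and A: "A \<subseteq> V"
  shows "card (V - deficient I) \<le> top_bound A"
proof -
  let ?N = "V - deficient I"
  have "card ?N \<le> card (?N \<inter> A) + card (?N - A)"
    using card_Un_le[of "?N \<inter> A" "?N - A"] by (metis Int_Diff_Un)
  moreover have "card (?N \<inter> A) \<le> card A"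
    by (rule card_mono) (use A finite_V finite_subset in auto)
  moreover have "card (?N - A) = card (I \<inter> \<Union>(\<delta> ` (?N - A)))"
    by (rule card_Int_Union_delta[OF I, symmetric]) (use nondeficient_Int_delta in auto)
  moreover have "card (I \<inter> \<Union>(\<delta> ` (?N - A))) \<le> rk (top_union (V - A))"
  proof (rule card_le_rk)
    show "I \<inter> \<Union>(\<delta> ` (?N - A)) \<subseteq> top_union (V - A)"
      unfolding top_union_def using nondeficient_edge_top[OF I] by blast
  qed (use indep_subset cis_indep[OF I] in blast)
  ultimately show ?thesis unfolding top_bound_def by linarith
qed

lemma popular_top_bound_le:
  assumes I: "cis I" and pop: "popular Ind V \<delta> pref I"
  shows "top_bound (V - reachable I) \<le> card (V - deficient I)"
proof -
  let ?R = "reachable I" and ?Z = "I \<inter> \<Union>(\<delta> ` (reachable I - deficient I))"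
  have Z: "?Z \<in> Ind" using indep_subset cis_indep[OF I] by blast
  have "top_union ?R \<subseteq> cl ?Z"
  proof
    fix e assume "e \<in> top_union ?R"
    then obtain w where w: "w \<in> ?R" "e \<in> top_edges w" unfolding top_union_def by (rule UN_E)
    show "e \<in> cl ?Z"
    proof (cases "e \<in> I")
      case True
      have e: "e \<in> \<delta> w" using w(2) top_edges_subset by blast
      then have "w \<notin> deficient I" using True w(2) by (auto simp: deficient_def)
      then have "e \<in> ?Z" using True w(1) e by blast
      then show ?thesis using subset_cl[OF indep_subset_ground[OF Z]] by blast
    next
      case False
      then have "e \<in> moves I w" using top_subset_moves[OF I] w(2) by blast
      then show ?thesis by (rule move_in_cl_reachable[OF I pop w(1)])
    qed
  qed
  moreover obtain K where K: "K \<subseteq> top_union ?R" "K \<in> Ind" "card K = rk (top_union ?R)"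
    by (rule rk_witness)
  ultimately have "card K \<le> rk ?Z" using card_le_rk_if_subset_cl by blast
  then have "rk (top_union ?R) \<le> card ?Z" using K rk_indep[OF Z] by simp
  moreover have "card ?Z = card (?R - deficient I)"
    by (rule card_Int_Union_delta[OF I]) (use reachable_subset nondeficient_Int_delta in auto)
  moreover have "card (V - deficient I) = card (V - ?R) + card (?R - deficient I)"
  proof -
    have "V - deficient I = (V - ?R) \<union> (?R - deficient I)"
      using reachable_subset deficient_subset_reachable by blast
    moreover have "?R - deficient I \<subseteq> V" using reachable_subset by blast
    then have "finite (?R - deficient I)" using finite_subset finite_V by blast
    ultimately show ?thesis using card_Un_disjoint[of "V - ?R" "?R - deficient I"] finite_V by auto
  qed
  moreover have "V - (V - ?R) = ?R" using reachable_subset by blast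
  ultimately show ?thesis unfolding top_bound_def by simp
qed

lemma top_bound_submod:
  assumes "A \<subseteq> V" "B \<subseteq> V"
  shows "top_bound (A \<inter> B) + top_bound (A \<union> B) \<le> top_bound A + top_bound B"
proof -
  have "finite A" "finite B" using assms finite_V finite_subset by auto
  then have "card (A \<inter> B) + card (A \<union> B) = card A + card B" using card_Un_Int[of A B] by simp
  moreover have "top_union (V - (A \<union> B)) \<subseteq> top_union (V - A) \<inter> top_union (V - B)"
    unfolding top_union_def by auto
  then have "rk (top_union (V - (A \<union> B))) \<le> rk (top_union (V - A) \<inter> top_union (V - B))"
    by (rule rk_mono)
  moreover have "top_union (V - (A \<inter> B)) = top_union (V - A) \<union> top_union (V - B)"
    unfolding top_union_def by auto
  ultimately show ?thesis
    using rk_submod[of "top_union (V - A)" "top_union (V - B)"] unfolding top_bound_def by simp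
qed

definition least_minimizer :: "'v set" where
  "least_minimizer = arg_min_on card {A. A \<subseteq> V \<and> top_bound A = Min (top_bound ` Pow V)}"

lemma least_minimizer:
  "least_minimizer \<subseteq> V" "top_bound least_minimizer = Min (top_bound ` Pow V)"
  "\<And>A. A \<subseteq> V \<Longrightarrow> top_bound A = Min (top_bound ` Pow V) \<Longrightarrow> card least_minimizer \<le> card A"
proof -
  let ?M = "{A. A \<subseteq> V \<and> top_bound A = Min (top_bound ` Pow V)}"
  have "Min (top_bound ` Pow V) \<in> top_bound ` Pow V" by (rule Min_in) (use finite_V in auto)
  then have "?M \<noteq> {}" by auto
  moreover have "finite ?M" using finite_V by simp
  ultimately have "least_minimizer \<in> ?M" "\<And>A. A \<in> ?M \<Longrightarrow> card least_minimizer \<le> card A"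
    unfolding least_minimizer_def using arg_min_if_finite[of ?M card] arg_min_least[of ?M] by auto
  then show "least_minimizer \<subseteq> V" "top_bound least_minimizer = Min (top_bound ` Pow V)"
    "\<And>A. A \<subseteq> V \<Longrightarrow> top_bound A = Min (top_bound ` Pow V) \<Longrightarrow> card least_minimizer \<le> card A"
    by auto
qed

lemma min_top_bound_le: "A \<subseteq> V \<Longrightarrow> Min (top_bound ` Pow V) \<le> top_bound A"
  by (rule Min_le) (use finite_V in auto)

lemma least_minimizer_subset:
  assumes B: "B \<subseteq> V" "top_bound B = Min (top_bound ` Pow V)"
  shows "least_minimizer \<subseteq> B"
proof -
  note A = least_minimizer
  have "top_bound (least_minimizer \<inter> B) + top_bound (least_minimizer \<union> B)
      \<le> top_bound least_minimizer + top_bound B"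
    by (rule top_bound_submod[OF A(1) B(1)])
  moreover have "Min (top_bound ` Pow V) \<le> top_bound (least_minimizer \<union> B)"
    "Min (top_bound ` Pow V) \<le> top_bound (least_minimizer \<inter> B)"
    by (rule min_top_bound_le; use A(1) B(1) in blast)+
  ultimately have "top_bound (least_minimizer \<inter> B) = Min (top_bound ` Pow V)"
    using A(2) B(2) by linarith
  then have "card least_minimizer \<le> card (least_minimizer \<inter> B)" using A(1,3) by blast
  moreover have "finite least_minimizer" using A(1) finite_V finite_subset by blast
  ultimately have "least_minimizer \<inter> B = least_minimizer" by (metis Int_lower1 card_seteq finite_Int)
  then show ?thesis by blast
qed

definition critical :: "'a set" where
  "critical = cl (top_union (V - least_minimizer))"

lemma popular_tight:
  assumes I: "cis I" and pop: "popular Ind V \<delta> pref I"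
  shows "card (V - deficient I) = Min (top_bound ` Pow V)" "least_minimizer \<subseteq> V - reachable I"
proof -
  have "Min (top_bound ` Pow V) \<le> top_bound (V - reachable I)" by (rule min_top_bound_le) blast
  moreover have "top_bound (V - reachable I) \<le> card (V - deficient I)"
    by (rule popular_top_bound_le[OF I pop])
  moreover have "card (V - deficient I) \<le> top_bound least_minimizer"
    by (rule card_nondeficient_le_top_bound[OF I least_minimizer(1)])
  ultimately have "top_bound (V - reachable I) = Min (top_bound ` Pow V)"
    and "card (V - deficient I) = Min (top_bound ` Pow V)"
    using least_minimizer(2) by linarith+
  then show "card (V - deficient I) = Min (top_bound ` Pow V)"
    and "least_minimizer \<subseteq> V - reachable I"
    using least_minimizer_subset[of "V - reachable I"] by auto
qed

lemma rk_critical: "rk critical = rk (top_union (V - least_minimizer))"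
  unfolding critical_def by (rule rk_cl) (rule top_union_subset, blast)

lemma popular_critical_basis:
  assumes I: "cis I" and pop: "popular Ind V \<delta> pref I"
  defines "P \<equiv> I \<inter> \<Union>(\<delta> ` (V - deficient I - least_minimizer))"
  shows "P \<subseteq> I \<inter> critical" "card P = rk critical"
proof -
  let ?A = least_minimizer and ?N = "V - deficient I"
  have cP: "card P = card (?N - ?A)" unfolding P_def
    by (rule card_Int_Union_delta[OF I]) (use nondeficient_Int_delta in auto)
  have PT: "P \<subseteq> top_union (V - ?A)" unfolding P_def top_union_def using nondeficient_edge_top[OF I] by blast
  then show "P \<subseteq> I \<inter> critical"
    using subset_cl[OF top_union_subset] unfolding P_def critical_def by blast
  have "card P \<le> rk (top_union (V - ?A))"
    by (rule card_le_rk[OF PT]) (use indep_subset cis_indep[OF I] in \<open>auto simp: P_def\<close>)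
  moreover have "card ?N \<le> card (?N \<inter> ?A) + card (?N - ?A)"
    using card_Un_le[of "?N \<inter> ?A" "?N - ?A"] by (metis Int_Diff_Un)
  moreover have "card (?N \<inter> ?A) \<le> card ?A"
    by (rule card_mono) (use least_minimizer(1) finite_V finite_subset in auto)
  ultimately show "card P = rk critical"
    using popular_tight(1)[OF I pop] least_minimizer(2) cP rk_critical unfolding top_bound_def by linarith
qed

definition certified :: "'a set \<Rightarrow> 'a set \<Rightarrow> bool" where
  "certified C J \<longleftrightarrow> cis J \<and> card (J \<inter> C) = rk C
     \<and> (\<forall>v\<in>V. \<forall>e\<in>J \<inter> \<delta> v. e \<in> C \<longrightarrow> e \<in> top_edges v \<and> top_edges v \<subseteq> C)
     \<and> (\<forall>v\<in>deficient J. better J v \<subseteq> C)"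

lemma popular_better_subset_critical:
  assumes I: "cis I" and pop: "popular Ind V \<delta> pref I" and v: "v \<in> deficient I"
  shows "better I v \<subseteq> critical"
proof
  fix e assume "e \<in> better I v"
  then have "e \<in> moves I v" using v unfolding moves_def by simp
  then have "e \<in> cl (I \<inter> \<Union>(\<delta> ` (reachable I - deficient I)))"
    using move_in_cl_reachable[OF I pop] deficient_subset_reachable v by blast
  moreover have "I \<inter> \<Union>(\<delta> ` (reachable I - deficient I)) \<subseteq> top_union (V - least_minimizer)"
    using nondeficient_edge_top[OF I] reachable_subset popular_tight(2)[OF I pop]
    unfolding top_union_def by blast
  ultimately show "e \<in> critical" using cl_mono unfolding critical_def by blast
qed

lemma certified_if_popular:
  assumes I: "cis I" and pop: "popular Ind V \<delta> pref I"
  shows "certified critical I"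
proof -
  define P where "P = I \<inter> \<Union>(\<delta> ` (V - deficient I - least_minimizer))"
  have P: "P \<subseteq> I \<inter> critical" "card P = rk critical"
    using popular_critical_basis[OF I pop] unfolding P_def by auto
  have IC: "I \<inter> critical \<in> Ind" using indep_subset cis_indep[OF I] by blast
  have "card (I \<inter> critical) \<le> rk critical" by (rule card_le_rk[OF _ IC]) blast
  moreover have "card P \<le> card (I \<inter> critical)" by (rule card_mono[OF indep_finite[OF IC] P(1)])
  ultimately have S1: "card (I \<inter> critical) = rk critical" using P(2) by simp
  have S2: "e \<in> top_edges v \<and> top_edges v \<subseteq> critical"
    if v: "v \<in> V" and e: "e \<in> I \<inter> \<delta> v" "e \<in> critical" for v e
  proof -
    have "e \<in> P"
    proof (rule ccontr)
      assume "e \<notin> P"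
      then have "card (insert e P) = Suc (rk critical)"
        using P(2) indep_finite[OF IC] finite_subset[OF P(1)] by simp
      moreover have "insert e P \<subseteq> I \<inter> critical" using P(1) e by blast
      then have "card (insert e P) \<le> rk critical" using card_le_rk indep_subset[OF IC] by blast
      ultimately show False by simp
    qed
    then obtain w where w: "w \<in> V - deficient I - least_minimizer" "e \<in> \<delta> w" unfolding P_def by blast
    then have "w = v" using delta_unique v e by blast
    then have "e \<in> top_edges v" "top_edges v \<subseteq> top_union (V - least_minimizer)"
      using nondeficient_edge_top[OF I v] w e unfolding top_union_def by auto
    then show ?thesis using subset_cl[OF top_union_subset[of "V - least_minimizer"]]
      unfolding critical_def by blast
  qed
  show ?thesis unfolding certified_def using I S1 S2 popular_better_subset_critical[OF I pop] by blast
qed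

lemma disjoint_family_delta: "disjoint_family_on \<delta> V"
  unfolding disjoint_family_on_def using delta_unique by blast

lemma card_Int_eq_card_hit:
  assumes "cis J"
  shows "card (J \<inter> X) = card {v \<in> V. J \<inter> X \<inter> \<delta> v \<noteq> {}}"
proof (rule card_eq_card_blocks_hit[OF finite_V _ _ disjoint_family_delta])
  show "finite (J \<inter> X)" using indep_finite[OF cis_indep[OF assms]] by blast
  show "J \<inter> X \<subseteq> (\<Union>v\<in>V. \<delta> v)" using indep_subset_ground[OF cis_indep[OF assms]] delta_cover by blast
  show "card (J \<inter> X \<inter> \<delta> v) \<le> 1" if "v \<in> V" for v
    using assms that card_mono[of "J \<inter> \<delta> v" "J \<inter> X \<inter> \<delta> v"] finite_delta[OF that]
    unfolding common_indep_def by fastforce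
qed

lemma certified_prefers_other:
  assumes J: "certified C J" and J': "cis J'" and a: "a \<in> V" "prefers \<delta> pref a J' J"
  shows "J' \<inter> C \<inter> \<delta> a \<noteq> {} \<and> J \<inter> C \<inter> \<delta> a = {}"
proof -
  obtain e' where e': "e' \<in> J' \<inter> \<delta> a" "e' \<in> better J a" "a \<in> deficient J"
  proof (cases "J \<inter> \<delta> a = {}")
    case True
    then obtain e' where "e' \<in> J' \<inter> \<delta> a" using a unfolding prefers_def by blast
    then show ?thesis
      using that True a nonloop_if_indep[OF cis_indep[OF J']] unfolding better_def deficient_def by auto
  next
    case False
    then obtain x e' where xe: "J \<inter> \<delta> a = {x}" "J' \<inter> \<delta> a = {e'}" "pref a e' x"
      using a unfolding prefers_def by blast
    have "nonloop e'" using xe(2) nonloop_if_indep[OF cis_indep[OF J']] by blast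
    then have "x \<notin> top_edges a" using not_pref_top[of x a e'] xe by blast
    then show ?thesis using that xe a \<open>nonloop e'\<close> unfolding better_def deficient_def by auto
  qed
  then have "e' \<in> C" using J unfolding certified_def by blast
  moreover have "J \<inter> C \<inter> \<delta> a = {}"
  proof (rule ccontr)
    assume "J \<inter> C \<inter> \<delta> a \<noteq> {}"
    then obtain x where "x \<in> J \<inter> \<delta> a" "x \<in> C" by blast
    then have "x \<in> top_edges a" using J a unfolding certified_def by blast
    then show False using e'(3) \<open>x \<in> J \<inter> \<delta> a\<close> unfolding deficient_def by blast
  qed
  ultimately show ?thesis using e'(1) by blast
qed

lemma certified_prefers_self:
  assumes J: "certified C J" and J': "cis J'" and b: "b \<in> V"
    and hit: "J \<inter> C \<inter> \<delta> b \<noteq> {}" and miss: "J' \<inter> C \<inter> \<delta> b = {}"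
  shows "prefers \<delta> pref b J J'"
proof -
  obtain x where x: "x \<in> J \<inter> \<delta> b" "x \<in> C" using hit by blast
  have Jb: "J \<inter> \<delta> b = {x}" using cis_Int_delta[OF _ b x(1)] J unfolding certified_def by blast
  have xt: "x \<in> top_edges b" "top_edges b \<subseteq> C" using J b x unfolding certified_def by blast+
  show ?thesis
  proof (cases "J' \<inter> \<delta> b = {}")
    case True
    then show ?thesis using Jb unfolding prefers_def by auto
  next
    case False
    then obtain e' where e': "e' \<in> J' \<inter> \<delta> b" by blast
    have "e' \<notin> top_edges b" using miss e' xt(2) by blast
    then have "pref b x e'" using pref_top[OF b xt(1)] e' nonloop_if_indep[OF cis_indep[OF J']] by blast
    then show ?thesis using Jb cis_Int_delta[OF J' b e'] unfolding prefers_def by auto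
  qed
qed

text \<open>The vertices preferring a rival \<open>J'\<close> all lie where \<open>J'\<close> but not \<open>J\<close> meets \<open>C\<close>, and
  there are at most as many of those as vertices where \<open>J\<close> but not \<open>J'\<close> meets \<open>C\<close>, all of
  which prefer \<open>J\<close>.\<close>
lemma popular_if_certified:
  assumes J: "certified C J"
  shows "popular Ind V \<delta> pref J"
proof -
  have cJ: "cis J" using J unfolding certified_def by blast
  have "phi V \<delta> pref J' J \<le> phi V \<delta> pref J J'" if J': "cis J'" for J'
  proof -
    define H where "H K = {v \<in> V. K \<inter> C \<inter> \<delta> v \<noteq> {}}" for K
    have fin: "finite (H K)" for K using finite_V unfolding H_def by simp
    have "card (H J') = card (J' \<inter> C)" unfolding H_def by (rule card_Int_eq_card_hit[OF J', symmetric])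
    also have "\<dots> \<le> rk C" by (rule card_le_rk) (use indep_subset cis_indep[OF J'] in blast)+
    also have "\<dots> = card (H J)" using J card_Int_eq_card_hit[OF cJ] unfolding certified_def H_def by simp
    finally have diff: "card (H J' - H J) \<le> card (H J - H J')"
      using card_Diff_subset_Int[of "H J' \<inter> H J"] fin by (simp add: card_Diff_subset_Int Int_commute)
    have "card {v \<in> V. prefers \<delta> pref v J' J} \<le> card (H J' - H J)"
      by (rule card_mono) (use fin certified_prefers_other[OF J J'] in \<open>auto simp: H_def\<close>)
    also have "\<dots> \<le> card (H J - H J')" by (rule diff)
    also have "\<dots> \<le> card {v \<in> V. prefers \<delta> pref v J J'}"
      by (rule card_mono) (use finite_V certified_prefers_self[OF J J'] in \<open>auto simp: H_def\<close>)
    finally show ?thesis unfolding phi_def .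
  qed
  then show ?thesis using cJ unfolding popular_def by blast
qed

theorem popular_iff_certified: "popular Ind V \<delta> pref J \<longleftrightarrow> certified critical J"
  using certified_if_popular popular_if_certified unfolding popular_def by blast

end

section \<open>The face of the matroid intersection polytope\<close>

lemma face_of_convex_hull_argmax:
  fixes S :: "'n::euclidean_space set"
  assumes S: "finite S" and le: "\<And>x. x \<in> S \<Longrightarrow> c \<bullet> x \<le> m"
  shows "convex hull S \<inter> {x. c \<bullet> x = m} face_of convex hull S"
    and "convex hull S \<inter> {x. c \<bullet> x = m} = convex hull {x \<in> S. c \<bullet> x = m}"
proof -
  have "convex hull S \<subseteq> {x. c \<bullet> x \<le> m}"
    by (rule hull_minimal) (use le convex_halfspace_le in auto)
  then show face: "convex hull S \<inter> {x. c \<bullet> x = m} face_of convex hull S"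
    by (intro face_of_Int_supporting_hyperplane_le convex_convex_hull) auto
  obtain S' where S': "S' \<subseteq> S" "convex hull S \<inter> {x. c \<bullet> x = m} = convex hull S'"
    using face_of_convex_hull_subset[OF finite_imp_compact[OF S] face] by blast
  then have "S' \<subseteq> {x \<in> S. c \<bullet> x = m}" using hull_inc[of _ S'] by blast
  then have "convex hull S' \<subseteq> convex hull {x \<in> S. c \<bullet> x = m}" by (rule hull_mono)
  moreover have "convex hull {x \<in> S. c \<bullet> x = m} \<subseteq> convex hull S \<inter> {x. c \<bullet> x = m}"
    by (rule hull_minimal) (auto intro: hull_inc convex_Int convex_hyperplane)
  ultimately show "convex hull S \<inter> {x. c \<bullet> x = m} = convex hull {x \<in> S. c \<bullet> x = m}"
    using S'(2) by blast
qed

lemma inner_incidence: "(\<chi> i. w i) \<bullet> incidence X = (\<Sum>x\<in>X. w x)"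
proof -
  have "(\<chi> i. w i) \<bullet> incidence X = (\<Sum>i\<in>UNIV. if i \<in> X then w i else 0)"
    unfolding inner_vec_def incidence_def by (auto intro: sum.cong)
  also have "\<dots> = (\<Sum>x\<in>X. w x)" by (simp add: sum.If_cases)
  finally show ?thesis .
qed

lemma linear_proj_E: "linear proj_E"
  by (rule linearI) (simp_all add: proj_E_def vec_eq_iff)

lemma proj_E_incidence: "proj_E (incidence X) = incidence {e. Inl e \<in> X}"
  by (simp add: proj_E_def incidence_def vec_eq_iff)

context popularity
begin

lemma finite_ext_ground: "finite (ext_ground E V)"
  unfolding ext_ground_def using finite_ground finite_V by simp

lemma ext_ground_blocks: "ext_ground E V = (\<Union>v\<in>V. Inl ` \<delta> v \<union> {Inr v})"
  using partition unfolding is_partition_def ext_ground_def by auto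

lemma card_partition_indep:
  assumes X: "X \<in> partition_indep E V \<delta>"
  shows "card X = card {v \<in> V. X \<inter> (Inl ` \<delta> v \<union> {Inr v}) \<noteq> {}}"
proof (rule card_eq_card_blocks_hit[OF finite_V])
  have "X \<subseteq> ext_ground E V" using X unfolding partition_indep_def by blast
  then show "finite X" using finite_ext_ground finite_subset by blast
  show "X \<subseteq> (\<Union>v\<in>V. Inl ` \<delta> v \<union> {Inr v})"
    using \<open>X \<subseteq> ext_ground E V\<close> ext_ground_blocks by blast
  show "disjoint_family_on (\<lambda>v. Inl ` \<delta> v \<union> {Inr v}) V"
    unfolding disjoint_family_on_def using delta_unique by blast
  show "card (X \<inter> (Inl ` \<delta> v \<union> {Inr v})) \<le> 1" if "v \<in> V" for v
    using X that unfolding partition_indep_def by blast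
qed

lemma partition_indep_card_le: "X \<in> partition_indep E V \<delta> \<Longrightarrow> card X \<le> card V"
  using card_partition_indep card_mono[OF finite_V] by (metis (no_types, lifting) mem_Collect_eq subsetI)

lemma partition_indep_card_eq_hit:
  assumes X: "X \<in> partition_indep E V \<delta>" and c: "card X = card V" and v: "v \<in> V"
  shows "X \<inter> (Inl ` \<delta> v \<union> {Inr v}) \<noteq> {}"
proof -
  have "{v \<in> V. X \<inter> (Inl ` \<delta> v \<union> {Inr v}) \<noteq> {}} = V"
    by (rule card_subset_eq[OF finite_V]) (use card_partition_indep[OF X] c in auto)
  then show ?thesis using v by blast
qed

lemma cis_Inl_part:
  assumes X: "X \<in> partition_indep E V \<delta> \<inter> ext_indep E V Ind"
  shows "cis {e. Inl e \<in> X}"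
  unfolding common_indep_def
proof (intro conjI ballI)
  show "{e. Inl e \<in> X} \<in> Ind" using X unfolding ext_indep_def by auto
  fix v assume v: "v \<in> V"
  have "finite X" using X finite_ext_ground finite_subset unfolding partition_indep_def by blast
  then have "card (Inl ` ({e. Inl e \<in> X} \<inter> \<delta> v) :: ('a + 'v) set) \<le> card (X \<inter> (Inl ` \<delta> v \<union> {Inr v}))"
    by (intro card_mono) auto
  also have "\<dots> \<le> 1" using X v unfolding partition_indep_def by blast
  finally show "card ({e. Inl e \<in> X} \<inter> \<delta> v) \<le> 1" by (simp add: card_image)
qed

text \<open>An element of \<open>E'\<close> is allowed if it can occur in the lift of a set certified by the critical
  set; the weight rewards allowed elements, and edges inside the critical set once more.\<close>
definition allowed :: "'a + 'v \<Rightarrow> bool" where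
  "allowed x = (case x of
      Inl e \<Rightarrow> (\<forall>v\<in>V. e \<in> \<delta> v \<longrightarrow> (e \<in> critical \<longrightarrow> e \<in> top_edges v \<and> top_edges v \<subseteq> critical)
                 \<and> (e \<notin> top_edges v \<longrightarrow> {g \<in> \<delta> v. nonloop g \<and> pref v g e} \<subseteq> critical))
    | Inr v \<Rightarrow> {g \<in> \<delta> v. nonloop g} \<subseteq> critical)"

definition weight :: "'a + 'v \<Rightarrow> real" where
  "weight x = (if allowed x then 1 + of_bool (x \<in> Inl ` critical) else 0)"

lemma sum_weight:
  assumes X: "finite X"
  shows "(\<Sum>x\<in>X. weight x) \<le> real (card X + card ({e. Inl e \<in> X} \<inter> critical))"
    and "(\<Sum>x\<in>X. weight x) = real (card X + card ({e. Inl e \<in> X} \<inter> critical)) \<longleftrightarrow> (\<forall>x\<in>X. allowed x)"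
proof -
  define b :: "'a + 'v \<Rightarrow> real" where "b x = 1 + of_bool (x \<in> Inl ` critical)" for x
  have "X \<inter> {x. x \<in> Inl ` critical} = Inl ` ({e. Inl e \<in> X} \<inter> critical)" by auto
  then have sum_b: "(\<Sum>x\<in>X. b x) = real (card X + card ({e. Inl e \<in> X} \<inter> critical))"
    using X by (simp add: b_def sum.distrib card_image)
  have le: "weight x \<le> b x" for x unfolding weight_def b_def by auto
  then show "(\<Sum>x\<in>X. weight x) \<le> real (card X + card ({e. Inl e \<in> X} \<inter> critical))"
    using sum_mono[of X weight b] sum_b by simp
  show "(\<Sum>x\<in>X. weight x) = real (card X + card ({e. Inl e \<in> X} \<inter> critical)) \<longleftrightarrow> (\<forall>x\<in>X. allowed x)"
  proof
    assume eq: "(\<Sum>x\<in>X. weight x) = real (card X + card ({e. Inl e \<in> X} \<inter> critical))"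
    show "\<forall>x\<in>X. allowed x"
    proof (rule ccontr)
      assume "\<not> (\<forall>x\<in>X. allowed x)"
      then obtain x where "x \<in> X" "weight x < b x" unfolding weight_def b_def by auto
      then have "(\<Sum>x\<in>X. weight x) < (\<Sum>x\<in>X. b x)" using sum_strict_mono_ex1[OF X] le by blast
      then show False using eq sum_b by simp
    qed
  next
    assume "\<forall>x\<in>X. allowed x"
    then have "(\<Sum>x\<in>X. weight x) = (\<Sum>x\<in>X. b x)" unfolding weight_def b_def by simp
    then show "(\<Sum>x\<in>X. weight x) = real (card X + card ({e. Inl e \<in> X} \<inter> critical))" using sum_b by simp
  qed
qed

abbreviation common_ext :: "('a + 'v) set set" where
  "common_ext \<equiv> partition_indep E V \<delta> \<inter> ext_indep E V Ind"

lemma partition_indep_subset: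
  assumes "X \<in> partition_indep E V \<delta>"
  shows "X \<subseteq> ext_ground E V"
  using assms unfolding partition_indep_def mem_Collect_eq by (rule conjunct1)

lemma finite_common_ext: "X \<in> common_ext \<Longrightarrow> finite X"
  by (rule finite_subset[OF partition_indep_subset[OF IntD1] finite_ext_ground])

lemma max_weight_le:
  assumes X: "X \<in> common_ext"
  shows "(\<Sum>x\<in>X. weight x) \<le> real (card V + rk critical)"
proof -
  have "card ({e. Inl e \<in> X} \<inter> critical) \<le> rk critical"
    by (rule card_le_rk[OF Int_lower2 indep_subset[OF cis_indep[OF cis_Inl_part[OF X]] Int_lower1]])
  then show ?thesis
    using sum_weight(1)[OF finite_common_ext[OF X]] partition_indep_card_le X by fastforce
qed

lemma certified_if_max_weight:
  assumes X: "X \<in> common_ext" and max: "(\<Sum>x\<in>X. weight x) = real (card V + rk critical)"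
  shows "certified critical {e. Inl e \<in> X}"
proof -
  define J where "J = {e. Inl e \<in> X}"
  have J: "cis J" unfolding J_def by (rule cis_Inl_part[OF X])
  have "card (J \<inter> critical) \<le> rk critical"
    by (rule card_le_rk[OF Int_lower2 indep_subset[OF cis_indep[OF J] Int_lower1]])
  moreover have "card X \<le> card V" using partition_indep_card_le X by blast
  ultimately have cX: "card X = card V" and S1: "card (J \<inter> critical) = rk critical"
    and al: "\<And>x. x \<in> X \<Longrightarrow> allowed x"
    using sum_weight[OF finite_common_ext[OF X]] max unfolding J_def by fastforce+
  have S2: "e \<in> top_edges v \<and> top_edges v \<subseteq> critical" if "v \<in> V" "e \<in> J \<inter> \<delta> v" "e \<in> critical" for v e
    using al[of "Inl e"] that unfolding J_def allowed_def by auto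
  have S3: "better J v \<subseteq> critical" if v: "v \<in> deficient J" for v
  proof (cases "J \<inter> \<delta> v = {}")
    case True
    have vV: "v \<in> V" using v deficient_subset by blast
    then obtain x where "x \<in> X" "x \<in> Inl ` \<delta> v \<union> {Inr v}"
      using partition_indep_card_eq_hit[OF _ cX] X by blast
    then have "Inr v \<in> X" using True unfolding J_def by auto
    then show ?thesis using al[of "Inr v"] unfolding allowed_def better_def by auto
  next
    case False
    then obtain e where e: "e \<in> J \<inter> \<delta> v" by blast
    have vV: "v \<in> V" using v deficient_subset by blast
    have Je: "J \<inter> \<delta> v = {e}" by (rule cis_Int_delta[OF J vV e])
    then have "e \<notin> top_edges v" using v unfolding deficient_def by auto
    then have "{g \<in> \<delta> v. nonloop g \<and> pref v g e} \<subseteq> critical"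
      using al[of "Inl e"] vV e unfolding J_def allowed_def by auto
    then show ?thesis using Je unfolding better_def by auto
  qed
  show ?thesis unfolding certified_def J_def[symmetric] using J S1 S2 S3 by blast
qed

definition lift :: "'a set \<Rightarrow> ('a + 'v) set" where
  "lift J = Inl ` J \<union> Inr ` {v \<in> V. J \<inter> \<delta> v = {}}"

lemma lift_Inl_part: "{e. Inl e \<in> lift J} = J"
  unfolding lift_def by auto

lemma lift_Int_block:
  assumes "v \<in> V"
  shows "lift J \<inter> (Inl ` \<delta> v \<union> {Inr v}) = (if J \<inter> \<delta> v = {} then {Inr v} else Inl ` (J \<inter> \<delta> v))"
  using assms unfolding lift_def by auto

lemma lift_common_ext:
  assumes J: "cis J"
  shows "lift J \<in> common_ext" "card (lift J) = card V"
proof -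
  have sub: "lift J \<subseteq> ext_ground E V"
    using indep_subset_ground[OF cis_indep[OF J]] unfolding lift_def ext_ground_def by auto
  have "card (lift J \<inter> (Inl ` \<delta> v \<union> {Inr v})) \<le> 1" if v: "v \<in> V" for v
    using J v unfolding lift_Int_block[OF v] common_indep_def by (simp add: card_image)
  then have P: "lift J \<in> partition_indep E V \<delta>" using sub unfolding partition_indep_def by blast
  have "lift J \<inter> (Inl ` \<delta> v \<union> {Inr v}) \<noteq> {}" if "v \<in> V" for v
    unfolding lift_Int_block[OF that] by simp
  then have "{v \<in> V. lift J \<inter> (Inl ` \<delta> v \<union> {Inr v}) \<noteq> {}} = V" by blast
  then show card: "card (lift J) = card V" using card_partition_indep[OF P] by simp
  moreover have "{e. Inl e \<in> lift J} \<in> Ind" using cis_indep[OF J] by (simp only: lift_Inl_part)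
  ultimately show "lift J \<in> common_ext" using P sub unfolding ext_indep_def by simp
qed

lemma allowed_if_certified:
  assumes cert: "certified critical J" and x: "x \<in> lift J"
  shows "allowed x"
proof -
  have J: "cis J"
    and S2: "\<And>v e. v \<in> V \<Longrightarrow> e \<in> J \<inter> \<delta> v \<Longrightarrow> e \<in> critical \<Longrightarrow> e \<in> top_edges v \<and> top_edges v \<subseteq> critical"
    and S3: "\<And>v. v \<in> deficient J \<Longrightarrow> better J v \<subseteq> critical"
    using cert unfolding certified_def by blast+
  show ?thesis
  proof (cases x)
    case (Inl e)
    then have e: "e \<in> J" using x unfolding lift_def by auto
    have "e \<in> critical \<longrightarrow> e \<in> top_edges v \<and> top_edges v \<subseteq> critical"
      and "e \<notin> top_edges v \<longrightarrow> {g \<in> \<delta> v. nonloop g \<and> pref v g e} \<subseteq> critical"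
      if v: "v \<in> V" "e \<in> \<delta> v" for v
    proof -
      show "e \<in> critical \<longrightarrow> e \<in> top_edges v \<and> top_edges v \<subseteq> critical" using S2 v e by blast
      have Je: "J \<inter> \<delta> v = {e}" using cis_Int_delta[OF J v(1)] e v by blast
      then have "e \<notin> top_edges v \<longrightarrow> v \<in> deficient J" using v unfolding deficient_def by auto
      then show "e \<notin> top_edges v \<longrightarrow> {g \<in> \<delta> v. nonloop g \<and> pref v g e} \<subseteq> critical"
        using S3[of v] Je unfolding better_def by auto
    qed
    then show ?thesis using Inl unfolding allowed_def by simp
  next
    case (Inr v)
    then have "v \<in> deficient J" "J \<inter> \<delta> v = {}" using x unfolding lift_def deficient_def by auto
    then show ?thesis using S3 Inr unfolding allowed_def better_def by auto
  qed
qed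

lemma max_weight_if_certified:
  assumes cert: "certified critical J"
  shows "lift J \<in> common_ext" "(\<Sum>x\<in>lift J. weight x) = real (card V + rk critical)"
proof -
  have J: "cis J" and S1: "card (J \<inter> critical) = rk critical"
    using cert unfolding certified_def by blast+
  show ext: "lift J \<in> common_ext" by (rule lift_common_ext(1)[OF J])
  have "(\<Sum>x\<in>lift J. weight x) = real (card (lift J) + card (J \<inter> critical))"
    using sum_weight(2)[OF finite_common_ext[OF ext]] allowed_if_certified[OF cert] lift_Inl_part[of J]
    by simp
  then show "(\<Sum>x\<in>lift J. weight x) = real (card V + rk critical)"
    using lift_common_ext(2)[OF J] S1 by simp
qed

lemma popular_eq_proj_max_weight:
  "{J. popular Ind V \<delta> pref J}
    = (\<lambda>X. {e. Inl e \<in> X}) ` {X \<in> common_ext. (\<Sum>x\<in>X. weight x) = real (card V + rk critical)}"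
proof (intro equalityI subsetI)
  fix J assume "J \<in> {J. popular Ind V \<delta> pref J}"
  then have "certified critical J" using popular_iff_certified by blast
  then have "lift J \<in> {X \<in> common_ext. (\<Sum>x\<in>X. weight x) = real (card V + rk critical)}"
    using max_weight_if_certified by blast
  then show "J \<in> (\<lambda>X. {e. Inl e \<in> X}) ` {X \<in> common_ext. (\<Sum>x\<in>X. weight x) = real (card V + rk critical)}"
    by (rule image_eqI[where f = "\<lambda>X. {e. Inl e \<in> X}", OF lift_Inl_part[of J, symmetric]])
next
  fix J assume "J \<in> (\<lambda>X. {e. Inl e \<in> X}) ` {X \<in> common_ext. (\<Sum>x\<in>X. weight x) = real (card V + rk critical)}"
  then obtain X where "X \<in> common_ext" "(\<Sum>x\<in>X. weight x) = real (card V + rk critical)"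
    and "J = {e. Inl e \<in> X}" by blast
  then show "J \<in> {J. popular Ind V \<delta> pref J}"
    using certified_if_max_weight popular_iff_certified by blast
qed

end

theorem theorem1p4:
  fixes E :: "('a::finite) set" and V :: "('v::finite) set"
    and \<delta> :: "'v \<Rightarrow> 'a set" and \<I> :: "'a set set"
    and pref :: "'v \<Rightarrow> 'a \<Rightarrow> 'a \<Rightarrow> bool"
  assumes "is_partition E V \<delta>"
    and "matroid E \<I>"
    and "\<forall>v\<in>V. weak_ranking (\<delta> v) (pref v)"
  shows "matroid (ext_ground E V) (partition_indep E V \<delta>)
    \<and> matroid (ext_ground E V) (ext_indep E V \<I>)
    \<and> (\<exists>F. F face_of
             (convex hull (incidence ` (partition_indep E V \<delta> \<inter> ext_indep E V \<I>)))
          \<and> proj_E ` F = convex hull (incidence ` {I. popular \<I> V \<delta> pref I}))"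
proof -
  interpret popularity E \<I> V \<delta> pref
    using assms by unfold_locales (simp_all add: fin_matroid_def)
  define m where "m = real (card V + rk critical)"
  define Max where "Max = {X \<in> common_ext. (\<Sum>x\<in>X. weight x) = m}"
  let ?S = "incidence ` common_ext" and ?c = "\<chi> x. weight x"
  have fin: "finite ?S"
    using finite_subset[OF _ finite_Pow_iff[THEN iffD2, OF finite_ext_ground]] partition_indep_subset
    by blast
  have inner: "?c \<bullet> incidence X = (\<Sum>x\<in>X. weight x)" for X by (rule inner_incidence)
  have le: "?c \<bullet> x \<le> m" if "x \<in> ?S" for x using that max_weight_le inner unfolding m_def by auto
  have "{x \<in> ?S. ?c \<bullet> x = m} = incidence ` Max" unfolding Max_def using inner by auto
  then have face: "convex hull ?S \<inter> {x. ?c \<bullet> x = m} face_of convex hull ?S"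
    and hull: "convex hull ?S \<inter> {x. ?c \<bullet> x = m} = convex hull (incidence ` Max)"
    using face_of_convex_hull_argmax[OF fin le] by simp_all
  have "proj_E ` (convex hull (incidence ` Max)) = convex hull (incidence ` (\<lambda>X. {e. Inl e \<in> X}) ` Max)"
    by (simp add: convex_hull_linear_image[OF linear_proj_E] image_image proj_E_incidence)
  also have "\<dots> = convex hull (incidence ` {I. popular \<I> V \<delta> pref I})"
    unfolding Max_def m_def popular_eq_proj_max_weight ..
  finally show ?thesis
    using matroid_partition_indep[OF assms(1) finite_ground finite_V] matroid_ext_indep[OF assms(2) finite_V]
      face hull by metis
qed

end
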